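(* Let $\tau$ be a countable relational signature and let $\mathcal{F}=\langle R_i:i<\omega\rangle$ be a countable family of relations on $\mathbb{N}$ (each of finite arity). Let $\mathrm{Aut}(\mathcal{F})$ be the group of permutations $g$ of $\mathbb{N}$ with $g(R_i)=R_i$ for all $i$. Then every $\mathrm{Aut}(\mathcal{F})$-invariant Borel subset of $X_\tau$ is definable in $\mathscr{L}_{\omega_1\omega}(\mathcal{F})$.
   Context: For a countable relational signature $\tau$ in which each $R\in\tau$ has finite arity $a(R)$, the logic space is $X_\tau=\prod_{R\in\tau}2^{\mathbb{N}^{a(R)}}$ with the product topology; its elements are $\tau$-structures with universe $\mathbb{N}$. A permutation $g$ of $\mathbb{N}$ acts on tuples coordinatewise, on subsets of $\mathbb{N}^k$ by $g(A)=\{g(a):a\in A\}$, and on $X_\tau$ by $R^{g(M)}=g(R^M)$ for each $R\in\tau$. For a group $G$ of permutations, $A\subseteq X_\tau$ is $G$-invariant if $g(A)=A$ for all $g\in G$. $\mathscr{L}_{\omega_1\omega}(\mathcal{F})$ is the infinitary logic with countable conjunctions and disjunctions and finite strings of ordinary quantifiers, in the signature $\tau$ together with a symbol for each $R_i$ with fixed interpretation $R_i$. A set $A\subseteq X_\tau$ is definable in it if there is a sentence $\varphi$ with $M\in A\iff M\models\varphi$ for all $M\in X_\tau$. *)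

theory Defs
  imports "HOL-Analysis.Analysis"
begin

text \<open>A countable relational signature tau is given by a set S of symbol indices
  (a subset of nat, hence countable) and an arity function ar.  A tau-structure with universe nat is an element of the logic
  space, represented as M :: nat => nat list => bool, extensional: M R is defined
  only for R in S and only on tuples of length ar R (R^M = the set of xs with M R xs).\<close>

definition tuples :: "nat \<Rightarrow> nat list set" where
  "tuples k = {xs. length xs = k}"

definition logic_space :: "nat set \<Rightarrow> (nat \<Rightarrow> nat) \<Rightarrow> (nat \<Rightarrow> nat list \<Rightarrow> bool) topology" where
  "logic_space S ar =
     product_topology (\<lambda>R. product_topology (\<lambda>xs. discrete_topology (UNIV :: bool set)) (tuples (ar R))) S"

definition borel_sets_of :: "'a topology \<Rightarrow> 'a set set" where
  "borel_sets_of T = sigma_sets (topspace T) {U. openin T U}"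

definition perm_act :: "nat set \<Rightarrow> (nat \<Rightarrow> nat) \<Rightarrow> (nat \<Rightarrow> nat) \<Rightarrow> (nat \<Rightarrow> nat list \<Rightarrow> bool) \<Rightarrow> (nat \<Rightarrow> nat list \<Rightarrow> bool)" where
  "perm_act S ar g M = (\<lambda>R\<in>S. \<lambda>xs\<in>tuples (ar R). (xs \<in> map g ` {ys. M R ys}))"

definition Aut :: "(nat \<Rightarrow> nat list set) \<Rightarrow> (nat \<Rightarrow> nat) set" where
  "Aut FR = {g. bij g \<and> (\<forall>i. map g ` FR i = FR i)}"

text \<open>Formulas of L_{omega_1 omega}(F): atoms for the symbols of tau, for the fixed
  relations R_i of F, and equality; negation; countable conjunctions and disjunctions
  (indexed by nat; every nonempty countable family can be so indexed, finite ones by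
  repetition); existential and universal quantification over a variable.\<close>
datatype form =
    Rel nat "nat list"
  | FRel nat "nat list"
  | Eq nat nat
  | Neg form
  | BigAnd "nat \<Rightarrow> form"
  | BigOr "nat \<Rightarrow> form"
  | Ex nat form
  | All nat form

primrec fv :: "form \<Rightarrow> nat set" where
  "fv (Rel R vs) = set vs"
| "fv (FRel i vs) = set vs"
| "fv (Eq u v) = {u, v}"
| "fv (Neg \<phi>) = fv \<phi>"
| "fv (BigAnd f) = (\<Union>n. fv (f n))"
| "fv (BigOr f) = (\<Union>n. fv (f n))"
| "fv (Ex v \<phi>) = fv \<phi> - {v}"
| "fv (All v \<phi>) = fv \<phi> - {v}"

primrec wf_form :: "nat set \<Rightarrow> (nat \<Rightarrow> nat) \<Rightarrow> (nat \<Rightarrow> nat) \<Rightarrow> form \<Rightarrow> bool" where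
  "wf_form S ar FA (Rel R vs) = (R \<in> S \<and> length vs = ar R)"
| "wf_form S ar FA (FRel i vs) = (length vs = FA i)"
| "wf_form S ar FA (Eq u v) = True"
| "wf_form S ar FA (Neg \<phi>) = wf_form S ar FA \<phi>"
| "wf_form S ar FA (BigAnd f) = (\<forall>n. wf_form S ar FA (f n))"
| "wf_form S ar FA (BigOr f) = (\<forall>n. wf_form S ar FA (f n))"
| "wf_form S ar FA (Ex v \<phi>) = wf_form S ar FA \<phi>"
| "wf_form S ar FA (All v \<phi>) = wf_form S ar FA \<phi>"

primrec sat :: "(nat \<Rightarrow> nat list set) \<Rightarrow> (nat \<Rightarrow> nat list \<Rightarrow> bool) \<Rightarrow> (nat \<Rightarrow> nat) \<Rightarrow> form \<Rightarrow> bool" where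
  "sat FR M e (Rel R vs) = M R (map e vs)"
| "sat FR M e (FRel i vs) = (map e vs \<in> FR i)"
| "sat FR M e (Eq u v) = (e u = e v)"
| "sat FR M e (Neg \<phi>) = (\<not> sat FR M e \<phi>)"
| "sat FR M e (BigAnd f) = (\<forall>n. sat FR M e (f n))"
| "sat FR M e (BigOr f) = (\<exists>n. sat FR M e (f n))"
| "sat FR M e (Ex v \<phi>) = (\<exists>a. sat FR M (e(v := a)) \<phi>)"
| "sat FR M e (All v \<phi>) = (\<forall>a. sat FR M (e(v := a)) \<phi>)"

definition sentence :: "nat set \<Rightarrow> (nat \<Rightarrow> nat) \<Rightarrow> (nat \<Rightarrow> nat) \<Rightarrow> form \<Rightarrow> bool" where
  "sentence S ar FA \<phi> \<longleftrightarrow> wf_form S ar FA \<phi> \<and> fv \<phi> = {}"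

text \<open>A is definable in L_{omega_1 omega}(F): some sentence phi with M in A iff M |= phi,
  for all M in X_tau (the assignment is irrelevant for sentences; we use the constant 0 one).\<close>
definition definable :: "nat set \<Rightarrow> (nat \<Rightarrow> nat) \<Rightarrow> (nat \<Rightarrow> nat) \<Rightarrow> (nat \<Rightarrow> nat list set)
    \<Rightarrow> (nat \<Rightarrow> nat list \<Rightarrow> bool) set \<Rightarrow> bool" where
  "definable S ar FA FR A \<longleftrightarrow>
     (\<exists>\<phi>. sentence S ar FA \<phi> \<and>
        (\<forall>M\<in>topspace (logic_space S ar). M \<in> A \<longleftrightarrow> sat FR M (\<lambda>_. 0) \<phi>))"

end

theory Submission
  imports Defs "HOL-Library.Sublist"
begin

(* G = Aut(F) carries the topology of pointwise convergence, with basic open sets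
   N q = {h in G. h i = q ! i for i < length q}; q is valid if N q is nonempty.  For a
   structure M and a set B of structures let hits M B = {h in G. h^{-1} M in B}.  B is good if
   every hits M B has (locally) the Baire property and, for B and for X - B and every n, the
   Vaught transform "hits M B is comeager in N q" of n-tuples q is expressed by a formula
   with n free variables.

   Hence all Borel sets are good.  For invariant A,
   hits M A is G or empty according as M lies in A, so the transform at the empty tuple is a
   sentence defining A. *)

definition FTrue :: form where "FTrue = All 0 (Eq 0 0)"
definition FFalse :: form where "FFalse = Neg FTrue"
definition Conj :: "form \<Rightarrow> form \<Rightarrow> form" where "Conj a b = BigAnd (\<lambda>k. if k = 0 then a else b)"
definition Imp :: "form \<Rightarrow> form \<Rightarrow> form" where "Imp a b = BigOr (\<lambda>k. if k = 0 then Neg a else b)"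

primrec exs :: "nat \<Rightarrow> nat \<Rightarrow> form \<Rightarrow> form" where
  "exs n 0 \<phi> = \<phi>"
| "exs n (Suc j) \<phi> = Ex n (exs (Suc n) j \<phi>)"

definition alls :: "nat \<Rightarrow> nat \<Rightarrow> form \<Rightarrow> form" where "alls n j \<phi> = Neg (exs n j (Neg \<phi>))"

primrec pure :: "form \<Rightarrow> bool" where
  "pure (Rel R vs) = False"
| "pure (FRel i vs) = True"
| "pure (Eq u v) = True"
| "pure (Neg \<phi>) = pure \<phi>"
| "pure (BigAnd f) = (\<forall>n. pure (f n))"
| "pure (BigOr f) = (\<forall>n. pure (f n))"
| "pure (Ex v \<phi>) = pure \<phi>"
| "pure (All v \<phi>) = pure \<phi>"

lemma FTrue_simps [simp]: "sat FR M e FTrue" "fv FTrue = {}" "wf_form S ar FA FTrue" "pure FTrue"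
  by (auto simp: FTrue_def)

lemma FFalse_simps [simp]: "\<not> sat FR M e FFalse" "fv FFalse = {}" "wf_form S ar FA FFalse" "pure FFalse"
  by (auto simp: FFalse_def)

lemma Conj_simps [simp]:
  "sat FR M e (Conj a b) = (sat FR M e a \<and> sat FR M e b)"
  "fv (Conj a b) = fv a \<union> fv b"
  "wf_form S ar FA (Conj a b) = (wf_form S ar FA a \<and> wf_form S ar FA b)"
  "pure (Conj a b) = (pure a \<and> pure b)"
  by (auto simp: Conj_def split: if_splits)

lemma Imp_simps [simp]:
  "sat FR M e (Imp a b) = (sat FR M e a \<longrightarrow> sat FR M e b)"
  "fv (Imp a b) = fv a \<union> fv b"
  "wf_form S ar FA (Imp a b) = (wf_form S ar FA a \<and> wf_form S ar FA b)"
  "pure (Imp a b) = (pure a \<and> pure b)"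
  by (auto simp: Imp_def split: if_splits)

lemma exs_simps [simp]:
  "fv (exs n j \<phi>) = fv \<phi> - {n..<n+j}"
  "wf_form S ar FA (exs n j \<phi>) = wf_form S ar FA \<phi>"
  "pure (exs n j \<phi>) = pure \<phi>"
  by (induction j arbitrary: n) auto

definition block_upd :: "nat \<Rightarrow> nat list \<Rightarrow> (nat \<Rightarrow> nat) \<Rightarrow> nat \<Rightarrow> nat" where
  "block_upd n w e = (\<lambda>v. if n \<le> v \<and> v < n + length w then w ! (v - n) else e v)"

lemma map_block_upd: "map (block_upd n w e) [0..<n + length w] = map e [0..<n] @ w"
  by (rule nth_equalityI) (auto simp: block_upd_def nth_append)

lemma sat_exs: "sat FR M e (exs n j \<phi>) \<longleftrightarrow> (\<exists>w. length w = j \<and> sat FR M (block_upd n w e) \<phi>)"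
proof (induction j arbitrary: n e)
  case 0
  have "block_upd n [] e = e" by (auto simp: block_upd_def)
  then show ?case by auto
next
  case (Suc j)
  have Cons: "block_upd (Suc n) w (e(n := a)) = block_upd n (a # w) e" for a w
    by (auto simp: block_upd_def fun_eq_iff nth_Cons')
  have "sat FR M e (exs n (Suc j) \<phi>) \<longleftrightarrow>
      (\<exists>a w. length w = j \<and> sat FR M (block_upd (Suc n) w (e(n := a))) \<phi>)"
    by (simp only: exs.simps sat.simps Suc.IH)
  also have "\<dots> \<longleftrightarrow> (\<exists>a w. length w = j \<and> sat FR M (block_upd n (a # w) e) \<phi>)"
    by (simp only: Cons)
  also have "\<dots> \<longleftrightarrow> (\<exists>w. length w = Suc j \<and> sat FR M (block_upd n w e) \<phi>)"
    by (metis length_Suc_conv)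
  finally show ?case .
qed

lemma sat_cong: "(\<And>v. v \<in> fv \<phi> \<Longrightarrow> e v = e' v) \<Longrightarrow> sat FR M e \<phi> = sat FR M e' \<phi>"
proof (induction \<phi> arbitrary: e e')
  case (Rel R vs)
  then have "map e vs = map e' vs" by auto
  then show ?case by (metis sat.simps(1))
next
  case (FRel i vs)
  then have "map e vs = map e' vs" by auto
  then show ?case by (metis sat.simps(2))
next
  case (Ex v \<phi>)
  have "sat FR M (e(v:=a)) \<phi> = sat FR M (e'(v:=a)) \<phi>" for a
    by (rule Ex.IH) (use Ex.prems in auto)
  then show ?case by simp
next
  case (All v \<phi>)
  have "sat FR M (e(v:=a)) \<phi> = sat FR M (e'(v:=a)) \<phi>" for a
    by (rule All.IH) (use All.prems in auto)
  then show ?case by simp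
next
  case (Eq u v)
  have "e u = e' u" "e v = e' v" using Eq by auto
  then show ?case by simp
next
  case (Neg \<phi>)
  have "sat FR M e \<phi> = sat FR M e' \<phi>" by (rule Neg.IH) (use Neg.prems in auto)
  then show ?case by simp
next
  case (BigAnd f)
  have "sat FR M e (f n) = sat FR M e' (f n)" for n
    by (rule BigAnd.IH) (use BigAnd.prems in auto)
  then show ?case by simp
next
  case (BigOr f)
  have "sat FR M e (f n) = sat FR M e' (f n)" for n
    by (rule BigOr.IH) (use BigOr.prems in auto)
  then show ?case by simp
qed

lemma sat_pure: "pure \<phi> \<Longrightarrow> sat FR M e \<phi> = sat FR M' e \<phi>"
  by (induction \<phi> arbitrary: e) simp_all

definition asg :: "nat list \<Rightarrow> nat \<Rightarrow> nat" where
  "asg a = (\<lambda>i. if i < length a then a ! i else 0)"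

definition empty_str :: "nat \<Rightarrow> nat list \<Rightarrow> bool" where
  "empty_str = (\<lambda>_ _. False)"

lemma asg_snoc: "v < Suc (length a) \<Longrightarrow> ((asg a)(length a := c)) v = asg (a @ [c]) v"
  by (auto simp: asg_def nth_append)

lemma prefix_nth: "prefix a b \<Longrightarrow> i < length a \<Longrightarrow> b ! i = a ! i"
  by (auto simp: prefix_def nth_append)

lemma prefix_map_upt: "a \<le> b \<Longrightarrow> prefix (map h [0..<a]) (map h [0..<b])"
proof (rule prefixI)
  assume "a \<le> b"
  then have "[0..<b] = [0..<a] @ [a..<b]" by (metis le0 upt_add_eq_append le_add_diff_inverse)
  then show "map h [0..<b] = map h [0..<a] @ map h [a..<b]" by simp
qed

lemma prefix_chain:
  assumes "\<And>k. prefix (qs k) (qs (Suc k))" and "k \<le> m"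
  shows "prefix (qs k) (qs m)"
  using assms(2)
proof (induction m rule: dec_induct)
  case (step n)
  then show ?case using assms(1)[of n] prefix_order.trans by blast
qed simp

lemma prefix_chain_limit:
  assumes step: "\<And>k. prefix (qs k) (qs (Suc k))" and long: "\<And>k. k < length (qs (Suc k))"
    and i: "i < length (qs m)"
  shows "qs (Suc i) ! i = qs m ! i"
proof (cases "Suc i \<le> m")
  case True
  then show ?thesis using prefix_nth[OF prefix_chain[of qs, OF step True] long] by simp
next
  case False
  then have "m \<le> Suc i" by simp
  then show ?thesis using prefix_nth[OF prefix_chain[of qs m "Suc i", OF step] i] by simp
qed

lemma prefix_chain_length:
  assumes "\<And>k. prefix (qs k) (qs (Suc k))" and "\<And>k. k < length (qs (Suc k))" and "Suc x \<le> m"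
  shows "x < length (qs m)"
  using assms(2)[of x] prefix_length_le[OF prefix_chain[of qs, OF assms(1,3)]] by simp

lemma prefix_chain_set:
  assumes "\<And>k. prefix (qs k) (qs (Suc k))" and "\<And>k. k \<in> set (qs (Suc k))" and "Suc x \<le> m"
  shows "x \<in> set (qs m)"
  using assms set_mono_prefix[OF prefix_chain[of qs, OF assms(1,3)]] by blast

lemma set_less_Suc_sum_list: "x \<in> set xs \<Longrightarrow> x < Suc (sum_list xs)"
  using member_le_sum_list[of x xs] by simp

locale fixed_family =
  fixes S :: "nat set" and ar :: "nat \<Rightarrow> nat" and FA :: "nat \<Rightarrow> nat" and FR :: "nat \<Rightarrow> nat list set"
  assumes FR_sub: "\<And>i. FR i \<subseteq> tuples (FA i)"
begin

abbreviation "X \<equiv> topspace (logic_space S ar)"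
abbreviation "G \<equiv> Aut FR"

definition expresses :: "nat \<Rightarrow> form \<Rightarrow> ((nat \<Rightarrow> nat list \<Rightarrow> bool) \<Rightarrow> nat list \<Rightarrow> bool) \<Rightarrow> bool" where
  "expresses n \<phi> P \<longleftrightarrow> wf_form S ar FA \<phi> \<and> fv \<phi> \<subseteq> {..<n} \<and>
     (\<forall>M\<in>X. \<forall>e. sat FR M e \<phi> \<longleftrightarrow> P M (map e [0..<n]))"

lemma expresses_exs:
  assumes "expresses (n + j) \<phi> P"
  shows "expresses n (exs n j \<phi>) (\<lambda>M q. \<exists>w. length w = j \<and> P M (q @ w))"
  unfolding expresses_def
proof (intro conjI ballI allI)
  show "wf_form S ar FA (exs n j \<phi>)" "fv (exs n j \<phi>) \<subseteq> {..<n}"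
    using assms by (auto simp: expresses_def)
  fix M e assume M: "M \<in> X"
  have "sat FR M e (exs n j \<phi>) \<longleftrightarrow> (\<exists>w. length w = j \<and> sat FR M (block_upd n w e) \<phi>)"
    by (rule sat_exs)
  also have "\<dots> \<longleftrightarrow> (\<exists>w. length w = j \<and> P M (map (block_upd n w e) [0..<n + j]))"
    using assms M unfolding expresses_def by blast
  also have "\<dots> \<longleftrightarrow> (\<exists>w. length w = j \<and> P M (map e [0..<n] @ w))"
    using map_block_upd by metis
  finally show "sat FR M e (exs n j \<phi>) \<longleftrightarrow> (\<exists>w. length w = j \<and> P M (map e [0..<n] @ w))" .
qed

lemma expresses_Neg: "expresses n \<phi> P \<Longrightarrow> expresses n (Neg \<phi>) (\<lambda>M q. \<not> P M q)"
  by (simp add: expresses_def)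

lemma expresses_alls:
  assumes "expresses (n + j) \<phi> P"
  shows "expresses n (alls n j \<phi>) (\<lambda>M q. \<forall>w. length w = j \<longrightarrow> P M (q @ w))"
  using expresses_Neg[OF expresses_exs[OF expresses_Neg[OF assms]]] unfolding alls_def by simp

lemma expresses_BigAnd: "(\<And>k. expresses n (f k) (P k)) \<Longrightarrow> expresses n (BigAnd f) (\<lambda>M q. \<forall>k. P k M q)"
  unfolding expresses_def by auto

lemma expresses_BigOr: "(\<And>k. expresses n (f k) (P k)) \<Longrightarrow> expresses n (BigOr f) (\<lambda>M q. \<exists>k. P k M q)"
  unfolding expresses_def by auto

lemma expresses_Conj: "expresses n a P \<Longrightarrow> expresses n b Q \<Longrightarrow> expresses n (Conj a b) (\<lambda>M q. P M q \<and> Q M q)"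
  unfolding expresses_def by auto

lemma expresses_Imp: "expresses n a P \<Longrightarrow> expresses n b Q \<Longrightarrow> expresses n (Imp a b) (\<lambda>M q. P M q \<longrightarrow> Q M q)"
  unfolding expresses_def by auto

lemma expresses_FTrue: "expresses n FTrue (\<lambda>M q. True)"
  and expresses_FFalse: "expresses n FFalse (\<lambda>M q. False)"
  unfolding expresses_def by auto

lemma expresses_cong:
  "expresses n \<phi> P \<Longrightarrow> (\<And>M q. M \<in> X \<Longrightarrow> length q = n \<Longrightarrow> P M q = P' M q) \<Longrightarrow> expresses n \<phi> P'"
  unfolding expresses_def by auto

lemma expresses_BigOr2:
  assumes "\<And>a b. expresses n (f a b) (P a b)"
  shows "expresses n (BigOr (\<lambda>i. case prod_decode i of (a, b) \<Rightarrow> f a b)) (\<lambda>M q. \<exists>a b. P a b M q)"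
proof -
  have "expresses n (BigOr (\<lambda>i. case prod_decode i of (a, b) \<Rightarrow> f a b))
      (\<lambda>M q. \<exists>i. (case prod_decode i of (a, b) \<Rightarrow> P a b) M q)"
    by (rule expresses_BigOr) (simp add: assms split: prod.split)
  then show ?thesis
  proof (rule expresses_cong)
    fix M q
    show "(\<exists>i. (case prod_decode i of (a, b) \<Rightarrow> P a b) M q) = (\<exists>a b. P a b M q)"
    proof
      assume "\<exists>i. (case prod_decode i of (a, b) \<Rightarrow> P a b) M q"
      then obtain i where "(case prod_decode i of (a, b) \<Rightarrow> P a b) M q" by blast
      then show "\<exists>a b. P a b M q" by (cases "prod_decode i") auto
    next
      assume "\<exists>a b. P a b M q"
      then obtain a b where "P a b M q" by blast
      then have "(case prod_decode (prod_encode (a, b)) of (a, b) \<Rightarrow> P a b) M q" by simp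
      then show "\<exists>i. (case prod_decode i of (a, b) \<Rightarrow> P a b) M q" by blast
    qed
  qed
qed

lemma G_bij: "h \<in> G \<Longrightarrow> bij h" by (simp add: Aut_def)
lemma G_inj: "h \<in> G \<Longrightarrow> inj h" by (simp add: Aut_def bij_def)
lemma G_surj: "h \<in> G \<Longrightarrow> surj h" by (simp add: Aut_def bij_def)

lemma G_preserves:
  assumes g: "g \<in> G" shows "map g xs \<in> FR i \<longleftrightarrow> xs \<in> FR i"
proof
  assume "map g xs \<in> FR i"
  then have "map g xs \<in> map g ` FR i" using g by (simp add: Aut_def)
  then obtain zs where "zs \<in> FR i" "map g zs = map g xs" by auto
  then show "xs \<in> FR i" using G_inj[OF g] by (metis inj_map_eq_map)
next
  assume "xs \<in> FR i"
  then show "map g xs \<in> FR i" using g by (auto simp: Aut_def)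
qed

lemma Aut_intro:
  assumes b: "bij h" and pres: "\<And>i xs. map h xs \<in> FR i \<longleftrightarrow> xs \<in> FR i"
  shows "h \<in> G"
proof -
  have "FR i \<subseteq> map h ` FR i" for i
  proof
    fix ys assume ys: "ys \<in> FR i"
    have "map h (map (inv h) ys) = ys" using b by (simp add: bij_is_surj map_idI surj_f_inv_f)
    then show "ys \<in> map h ` FR i" using pres[of "map (inv h) ys"] ys by (metis image_eqI)
  qed
  then show ?thesis using b pres by (auto simp: Aut_def)
qed

text \<open>G is closed in the topology of pointwise convergence.\<close>
lemma Aut_closed:
  assumes b: "bij h" and approx: "\<And>xs. \<exists>g\<in>G. \<forall>x\<in>set xs. g x = h x"
  shows "h \<in> G"
proof (rule Aut_intro[OF b])
  fix i xs
  obtain g where g: "g \<in> G" "\<forall>x\<in>set xs. g x = h x" using approx by blast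
  then have "map h xs = map g xs" by simp
  then show "map h xs \<in> FR i \<longleftrightarrow> xs \<in> FR i" by (metis G_preserves[OF g(1)])
qed

lemma id_G: "id \<in> G" by (simp add: Aut_def)

lemma inv_G:
  assumes h: "h \<in> G" shows "inv h \<in> G"
proof (rule Aut_intro)
  show "bij (inv h)" using G_bij[OF h] by (rule bij_imp_bij_inv)
  fix i xs
  have "map h (map (inv h) xs) = xs" using G_surj[OF h] by (simp add: map_idI surj_f_inv_f)
  then show "map (inv h) xs \<in> FR i \<longleftrightarrow> xs \<in> FR i" using G_preserves[OF h, of "map (inv h) xs" i] by simp
qed

definition N :: "nat list \<Rightarrow> (nat \<Rightarrow> nat) set" where
  "N q = {h \<in> G. q = map h [0..<length q]}"

definition valid :: "nat list \<Rightarrow> bool" where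
  "valid q \<longleftrightarrow> N q \<noteq> {}"

lemma N_sub: "N q \<subseteq> G" by (auto simp: N_def)

lemma N_Nil: "N [] = G" by (auto simp: N_def)

lemma N_nth:
  assumes "h \<in> N q" and "i < length q" shows "h i = q ! i"
proof -
  have "q = map h [0..<length q]" using assms(1) unfolding N_def by blast
  then have "q ! i = map h [0..<length q] ! i" by simp
  then show ?thesis using assms(2) by simp
qed

lemma N_iff: "h \<in> N q \<longleftrightarrow> h \<in> G \<and> (\<forall>i<length q. h i = q ! i)"
proof
  assume "h \<in> N q" then show "h \<in> G \<and> (\<forall>i<length q. h i = q ! i)" using N_nth N_sub by blast
next
  assume "h \<in> G \<and> (\<forall>i<length q. h i = q ! i)"
  then show "h \<in> N q" unfolding N_def by (auto intro!: nth_equalityI)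
qed

lemma in_N: "h \<in> G \<Longrightarrow> h \<in> N (map h [0..<n])"
  by (simp add: N_def)

lemma N_mono:
  assumes "prefix q r" shows "N r \<subseteq> N q"
proof
  fix h assume "h \<in> N r"
  moreover have "i < length q \<Longrightarrow> i < length r" for i using prefix_length_le[OF assms] by simp
  ultimately show "h \<in> N q" using prefix_nth[OF assms] by (simp add: N_iff)
qed

lemma N_incomparable: "\<not> prefix q r \<Longrightarrow> \<not> prefix r q \<Longrightarrow> N q \<inter> N r = {}"
proof (rule ccontr)
  assume a: "\<not> prefix q r" "\<not> prefix r q" "N q \<inter> N r \<noteq> {}"
  then obtain h where "q = map h [0..<length q]" "r = map h [0..<length r]" by (auto simp: N_def)
  then show False using a(1,2) prefix_map_upt[of "length q" "length r" h] prefix_map_upt[of "length r" "length q" h]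
    by (cases "length q \<le> length r") auto
qed

lemma N_refine:
  assumes hq: "h \<in> N q" and hs: "h \<in> N s"
  shows "\<exists>t. prefix q t \<and> prefix s t \<and> h \<in> N t"
proof -
  define t where "t = map h [0..<max (length q) (length s)]"
  have "q = map h [0..<length q]" "s = map h [0..<length s]" using hq hs by (auto simp: N_def)
  then have "prefix q t" "prefix s t"
    unfolding t_def by (metis max.cobounded1 prefix_map_upt, metis max.cobounded2 prefix_map_upt)
  moreover have "h \<in> N t" unfolding t_def using hq N_sub by (blast intro: in_N)
  ultimately show ?thesis by blast
qed

lemma valid_map: "h \<in> G \<Longrightarrow> valid (map h [0..<n])"
  using in_N unfolding valid_def by blast

lemma valid_Nil: "valid []" using id_G N_Nil valid_def by auto

lemma valid_distinct: "valid q \<Longrightarrow> distinct q"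
proof -
  assume "valid q"
  then obtain h where h: "h \<in> G" "q = map h [0..<length q]" by (auto simp: valid_def N_def)
  have "distinct (map h [0..<length q])" using G_inj[OF h(1)] by (simp add: distinct_map inj_on_def inj_def)
  then show "distinct q" using h(2) by simp
qed

section \<open>Category in G: the Baire category theorem\<close>

definition nwd :: "(nat \<Rightarrow> nat) set \<Rightarrow> bool" where
  "nwd Z \<longleftrightarrow> (\<forall>q. valid q \<longrightarrow> (\<exists>r. prefix q r \<and> valid r \<and> N r \<inter> Z = {}))"

definition meager :: "(nat \<Rightarrow> nat) set \<Rightarrow> bool" where
  "meager C \<longleftrightarrow> (\<exists>Z. (\<forall>k::nat. nwd (Z k)) \<and> C \<inter> G \<subseteq> (\<Union>k. Z k))"

lemma nwd_empty: "nwd {}"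
  unfolding nwd_def using prefix_order.refl by blast

lemma meager_nwd: "nwd Z \<Longrightarrow> meager Z"
  unfolding meager_def by (intro exI[of _ "\<lambda>_. Z"]) auto

lemma meager_mono: "C \<subseteq> D \<Longrightarrow> meager D \<Longrightarrow> meager C"
  unfolding meager_def by blast

lemma meager_empty: "meager {}"
  using meager_nwd[OF nwd_empty] .

lemma meager_UN:
  assumes "\<And>k::nat. meager (C k)" shows "meager (\<Union>k. C k)"
proof -
  have "\<forall>k. \<exists>Z. (\<forall>j::nat. nwd (Z j)) \<and> C k \<inter> G \<subseteq> (\<Union>j. Z j)"
    using assms unfolding meager_def by blast
  then obtain Z where "\<forall>k. (\<forall>j::nat. nwd (Z k j)) \<and> C k \<inter> G \<subseteq> (\<Union>j. Z k j)"
    by (rule choice_iff[THEN iffD1, elim_format]) blast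
  then have Z: "\<And>k j. nwd (Z k j)" "\<And>k. C k \<inter> G \<subseteq> (\<Union>j. Z k j)" by blast+
  define Z' where "Z' i = (case prod_decode i of (k, j) \<Rightarrow> Z k j)" for i
  have "nwd (Z' i)" for i using Z(1) by (simp add: Z'_def split: prod.splits)
  moreover have "(\<Union>k. C k) \<inter> G \<subseteq> (\<Union>i. Z' i)"
  proof
    fix h assume "h \<in> (\<Union>k. C k) \<inter> G"
    then obtain k j where "h \<in> Z k j" using Z(2) by blast
    then have "h \<in> Z' (prod_encode (k, j))" by (simp add: Z'_def)
    then show "h \<in> (\<Union>i. Z' i)" by blast
  qed
  ultimately show ?thesis unfolding meager_def by blast
qed

lemma meager_Un:
  assumes "meager A" "meager B" shows "meager (A \<union> B)"
proof -
  have "(\<Union>k. if k = (0::nat) then A else B) = A \<union> B" by (auto split: if_splits)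
  then show ?thesis using meager_UN[of "\<lambda>k. if k = 0 then A else B"] assms by simp
qed

lemma meager_UN_countable:
  assumes "\<And>x::'a::countable. meager (C x)" shows "meager (\<Union>x. C x)"
proof -
  have "C x \<subseteq> (\<Union>k. C (from_nat k))" for x
  proof -
    have "C x = C (from_nat (to_nat x))" by simp
    then show ?thesis by blast
  qed
  then have "(\<Union>x. C x) = (\<Union>k. C (from_nat k))" by blast
  then show ?thesis using meager_UN[of "\<lambda>k. C (from_nat k)"] assms by simp
qed

lemma extend_avoiding:
  assumes r: "valid r" and Z: "nwd Z"
  shows "\<exists>r'. prefix r r' \<and> valid r' \<and> N r' \<inter> Z = {} \<and> k < length r' \<and> k \<in> set r'"
proof -
  obtain r1 where r1: "prefix r r1" "valid r1" "N r1 \<inter> Z = {}" using r Z unfolding nwd_def by blast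
  obtain g where g: "g \<in> N r1" using r1(2) unfolding valid_def by blast
  then have gG: "g \<in> G" and r1_eq: "r1 = map g [0..<length r1]" by (auto simp: N_def)
  define r' where "r' = map g [0..<max (length r1) (max (Suc k) (Suc (inv g k)))]"
  have r1r': "prefix r1 r'" unfolding r'_def by (subst r1_eq) (rule prefix_map_upt, simp)
  have "g (inv g k) \<in> set r'" unfolding r'_def by simp
  then have "k \<in> set r'" using G_surj[OF gG] by (simp add: surj_f_inv_f)
  moreover have "prefix r r'" using r1(1) r1r' by (rule prefix_order.trans)
  moreover have "N r' \<inter> Z = {}" using N_mono[OF r1r'] r1(3) by blast
  moreover have "valid r'" unfolding r'_def using gG by (rule valid_map)
  moreover have "k < length r'" unfolding r'_def by simp
  ultimately show ?thesis by blast
qed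

text \<open>Completeness of G: the limit of a chain of valid lists which eventually covers every
  natural number both as argument and as value is an automorphism extending every member.\<close>
lemma valid_chain_limit:
  assumes valid: "\<And>k. valid (qs k)" and step: "\<And>k. prefix (qs k) (qs (Suc k))"
    and dom: "\<And>k. k < length (qs (Suc k))" and ran: "\<And>k. k \<in> set (qs (Suc k))"
  shows "(\<lambda>n. qs (Suc n) ! n) \<in> N (qs m)"
proof -
  define h where "h n = qs (Suc n) ! n" for n
  have h_eq: "h i = qs m ! i" if "i < length (qs m)" for i m
    unfolding h_def using prefix_chain_limit[OF step dom that] .
  have long: "x < length (qs (Suc x))" for x using dom .
  have "inj h"
  proof (rule injI)
    fix i j assume e: "h i = h j"
    define m where "m = Suc (max i j)"
    have ij: "i < length (qs m)" "j < length (qs m)"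
      unfolding m_def by (auto intro: prefix_chain_length[OF step dom])
    then have "qs m ! i = qs m ! j" using e h_eq by metis
    then show "i = j" using ij valid_distinct[OF valid] by (simp add: nth_eq_iff_index_eq)
  qed
  moreover have "surj h"
  proof -
    have "y \<in> range h" for y
    proof -
      obtain i where "i < length (qs (Suc y))" "qs (Suc y) ! i = y" using ran[of y] by (metis in_set_conv_nth)
      then show ?thesis using h_eq by (metis rangeI)
    qed
    then show ?thesis by blast
  qed
  moreover have "\<exists>g\<in>G. \<forall>x\<in>set xs. g x = h x" for xs
  proof -
    define m where "m = Suc (sum_list xs)"
    obtain g where g: "g \<in> N (qs m)" using valid unfolding valid_def by blast
    have "g x = h x" if "x \<in> set xs" for x
    proof -
      have "x < length (qs m)"
        using prefix_chain_length[OF step dom] set_less_Suc_sum_list[OF that] unfolding m_def by simp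
      then show ?thesis using N_nth[OF g] h_eq[of x m] by simp
    qed
    then show ?thesis using g N_sub by blast
  qed
  ultimately have "h \<in> G" by (intro Aut_closed bijI)
  then have "h \<in> N (qs m)" using h_eq by (simp add: N_iff)
  moreover have "h = (\<lambda>n. qs (Suc n) ! n)" by (simp add: h_def fun_eq_iff)
  ultimately show ?thesis by simp
qed

theorem baire: "valid q \<Longrightarrow> \<not> meager (N q)"
proof
  assume q: "valid q" and "meager (N q)"
  then obtain Z :: "nat \<Rightarrow> _" where Z: "\<And>k. nwd (Z k)" "N q \<inter> G \<subseteq> (\<Union>k. Z k)"
    unfolding meager_def by blast
  define P where "P k r \<longleftrightarrow> valid r \<and> (k = 0 \<longrightarrow> r = q)" for k :: nat and r
  define Q where "Q k r r' \<longleftrightarrow> prefix r r' \<and> N r' \<inter> Z k = {} \<and> k < length r' \<and> k \<in> set r'"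
    for k r r'
  have "\<exists>qs. \<forall>k. P k (qs k) \<and> Q k (qs k) (qs (Suc k))"
  proof (rule dependent_nat_choice)
    show "\<exists>r. P 0 r" using q unfolding P_def by blast
  next
    fix r and k :: nat assume "P k r"
    then have "valid r" unfolding P_def by blast
    then show "\<exists>r'. P (Suc k) r' \<and> Q k r r'"
      using extend_avoiding[OF _ Z(1), of r k k] unfolding P_def Q_def by blast
  qed
  then obtain qs where qs: "\<And>k. P k (qs k)" "\<And>k. Q k (qs k) (qs (Suc k))" by blast
  define h where "h n = qs (Suc n) ! n" for n
  have hN: "h \<in> N (qs m)" for m
    unfolding h_def using qs unfolding P_def Q_def by (intro valid_chain_limit) blast+
  then have "h \<in> N q \<inter> G" using hN[of 0] qs(1)[of 0] N_sub unfolding P_def by blast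
  then obtain k where "h \<in> Z k" using Z(2) by blast
  then show False using hN[of "Suc k"] qs(2)[of k] unfolding Q_def by blast
qed

lemma nwd_uncovered:
  assumes dense: "\<And>r. prefix q r \<Longrightarrow> valid r \<Longrightarrow> \<exists>s\<in>E. prefix r s"
    and valid_E: "\<And>s. s \<in> E \<Longrightarrow> valid s"
  shows "nwd (N q - (\<Union>s\<in>E. N s))" (is "nwd ?Z")
  unfolding nwd_def
proof (intro allI impI)
  fix r assume r: "valid r"
  have covered: "N s \<inter> ?Z = {}" if "s \<in> E" for s using that by blast
  consider "prefix q r" | "prefix r q" | "N q \<inter> N r = {}" using N_incomparable by blast
  then show "\<exists>s. prefix r s \<and> valid s \<and> N s \<inter> ?Z = {}"
  proof cases
    case 1
    then show ?thesis using dense[OF 1 r] valid_E covered by blast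
  next
    case 2
    show ?thesis
    proof (cases "valid q")
      case True
      then obtain s where "s \<in> E" "prefix q s" using dense prefix_order.refl by blast
      moreover have "prefix r s" using 2 \<open>prefix q s\<close> by (rule prefix_order.trans)
      ultimately show ?thesis using valid_E covered by blast
    next
      case False
      then have "N r \<inter> ?Z = {}" unfolding valid_def by blast
      then show ?thesis using r prefix_order.refl by blast
    qed
  next
    case 3
    then have "N r \<inter> ?Z = {}" by blast
    then show ?thesis using r prefix_order.refl by blast
  qed
qed

text \<open>Localization: C is meager in N q if it is meager in densely many smaller
  neighbourhoods below q (countably many basic sets, plus a nowhere dense remainder).\<close>
lemma localize:
  assumes H: "\<And>r. prefix q r \<Longrightarrow> valid r \<Longrightarrow> \<exists>s. prefix r s \<and> valid s \<and> meager (C \<inter> N s)"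
  shows "meager (C \<inter> N q)"
proof -
  define E where "E = {s. prefix q s \<and> valid s \<and> meager (C \<inter> N s)}"
  have "\<exists>s\<in>E. prefix r s" if "prefix q r" "valid r" for r
    using H[OF that] that(1) prefix_order.trans unfolding E_def by blast
  then have "meager (N q - (\<Union>s\<in>E. N s))"
    by (intro meager_nwd nwd_uncovered) (auto simp: E_def)
  moreover have "meager (\<Union>s::nat list. if s \<in> E then C \<inter> N s else {})"
    by (rule meager_UN_countable) (auto simp: E_def meager_empty)
  moreover have "C \<inter> N q \<subseteq> (\<Union>s::nat list. if s \<in> E then C \<inter> N s else {}) \<union> (N q - (\<Union>s\<in>E. N s))"
    by (auto split: if_splits)
  ultimately show ?thesis using meager_Un meager_mono by blast
qed

end

definition position :: "'a list \<Rightarrow> 'a \<Rightarrow> nat" where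
  "position L x = (SOME i. i < length L \<and> L ! i = x)"

lemma position: "x \<in> set L \<Longrightarrow> position L x < length L \<and> L ! position L x = x"
  unfolding position_def by (rule someI_ex) (simp add: in_set_conv_nth)

lemma list_positions: "set ys \<subseteq> set L \<Longrightarrow> \<exists>ps. (\<forall>p\<in>set ps. p < length L) \<and> ys = map (\<lambda>p. L ! p) ps"
proof (induction ys)
  case (Cons y ys)
  then obtain ps where ps: "\<forall>p\<in>set ps. p < length L" "ys = map (\<lambda>p. L ! p) ps" by auto
  obtain p where "p < length L" "L ! p = y" using Cons.prems by (metis in_set_conv_nth insert_subset list.simps(15))
  then show ?case using ps by (intro exI[of _ "p # ps"]) simp
qed simp

lemma chain_pattern:
  fixes A B :: "nat \<Rightarrow> nat list"
  assumes stepA: "\<And>k. prefix (A k) (A (Suc k))" and stepB: "\<And>k. prefix (B k) (B (Suc k))"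
    and len: "\<And>k. length (A k) = length (B k)"
    and pattern: "\<And>k i j. i < length (A k) \<Longrightarrow> j < length (A k) \<Longrightarrow> A k ! i = A k ! j \<longleftrightarrow> B k ! i = B k ! j"
    and i: "i < length (A k)" and j: "j < length (A m)"
  shows "A k ! i = A m ! j \<longleftrightarrow> B k ! i = B m ! j"
proof -
  define n where "n = max k m"
  have "prefix (A k) (A n)" "prefix (B k) (B n)" "prefix (A m) (A n)" "prefix (B m) (B n)"
    using prefix_chain[of A k n, OF stepA] prefix_chain[of B k n, OF stepB]
      prefix_chain[of A m n, OF stepA] prefix_chain[of B m n, OF stepB] unfolding n_def by simp_all
  moreover have "i < length (B k)" "j < length (B m)" using i j len by simp_all
  ultimately have eqs: "A n ! i = A k ! i" "B n ! i = B k ! i" "A n ! j = A m ! j" "B n ! j = B m ! j"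
    and "i < length (A n)" "j < length (A n)"
    using prefix_nth prefix_length_le i j by (blast, blast, blast, blast, fastforce, fastforce)
  then show ?thesis using pattern[of i n j] by (simp add: eqs[symmetric])
qed

lemma chain_correspondence:
  fixes A B :: "nat \<Rightarrow> nat list"
  assumes stepA: "\<And>k. prefix (A k) (A (Suc k))" and stepB: "\<And>k. prefix (B k) (B (Suc k))"
    and len: "\<And>k. length (A k) = length (B k)"
    and pattern: "\<And>k i j. i < length (A k) \<Longrightarrow> j < length (A k) \<Longrightarrow> A k ! i = A k ! j \<longleftrightarrow> B k ! i = B k ! j"
    and exhA: "\<And>k. k \<in> set (A (Suc k))" and exhB: "\<And>k. k \<in> set (B (Suc k))"
  shows "\<exists>g. bij g \<and> (\<forall>k i. i < length (A k) \<longrightarrow> g (A k ! i) = B k ! i)"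
proof -
  have across: "A k ! i = A m ! j \<longleftrightarrow> B k ! i = B m ! j"
    if "i < length (A k)" "j < length (A m)" for k i m j
    using stepA stepB len pattern that by (rule chain_pattern)
  define p where "p x = position (A (Suc x)) x" for x
  have p: "p x < length (A (Suc x))" "A (Suc x) ! p x = x" for x
    using position[OF exhA[of x]] unfolding p_def by auto
  define g where "g x = B (Suc x) ! p x" for x
  have g_A: "g (A k ! i) = B k ! i" if i: "i < length (A k)" for k i
    using across[OF p(1)[of "A k ! i"] i] p(2)[of "A k ! i"] unfolding g_def by simp
  have "inj g"
  proof (rule injI)
    fix x y assume "g x = g y"
    then show "x = y" using across[OF p(1)[of x] p(1)[of y]] p(2)[of x] p(2)[of y] unfolding g_def by simp
  qed
  moreover have "surj g"
  proof -
    have "y \<in> range g" for y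
    proof -
      obtain j where j: "j < length (B (Suc y))" "B (Suc y) ! j = y"
        using exhB[of y] by (metis in_set_conv_nth)
      then have "g (A (Suc y) ! j) = y" using g_A[of j "Suc y"] len[of "Suc y"] by simp
      then show ?thesis by (metis rangeI)
    qed
    then show ?thesis by blast
  qed
  ultimately show ?thesis using g_A by (blast intro: bijI)
qed

context fixed_family
begin

section \<open>Types of tuples in the pure language of F, and the back-and-forth argument\<close>

definition sim :: "nat list \<Rightarrow> nat list \<Rightarrow> bool" where
  "sim a b \<longleftrightarrow> length a = length b \<and> (\<forall>\<xi>. pure \<xi> \<longrightarrow> wf_form S ar FA \<xi> \<longrightarrow> fv \<xi> \<subseteq> {..<length a} \<longrightarrow>
      (sat FR empty_str (asg a) \<xi> \<longleftrightarrow> sat FR empty_str (asg b) \<xi>))"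

lemma sim_D:
  "sim a b \<Longrightarrow> pure \<xi> \<Longrightarrow> wf_form S ar FA \<xi> \<Longrightarrow> fv \<xi> \<subseteq> {..<length a} \<Longrightarrow>
    sat FR empty_str (asg a) \<xi> = sat FR empty_str (asg b) \<xi>"
  unfolding sim_def by blast

lemma sim_sym: "sim a b \<Longrightarrow> sim b a"
  unfolding sim_def by auto

definition separator :: "nat list \<Rightarrow> nat list \<Rightarrow> form" where
  "separator a b = (if length a = length b \<and> \<not> sim a b
     then SOME \<xi>. pure \<xi> \<and> wf_form S ar FA \<xi> \<and> fv \<xi> \<subseteq> {..<length a} \<and>
       sat FR empty_str (asg a) \<xi> \<and> \<not> sat FR empty_str (asg b) \<xi>
     else FTrue)"

lemma separator:
  "pure (separator a b) \<and> wf_form S ar FA (separator a b) \<and> fv (separator a b) \<subseteq> {..<length a} \<and>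
   sat FR empty_str (asg a) (separator a b) \<and>
   (length a = length b \<and> \<not> sim a b \<longrightarrow> \<not> sat FR empty_str (asg b) (separator a b))"
proof (cases "length a = length b \<and> \<not> sim a b")
  case True
  then obtain \<xi> where \<xi>: "pure \<xi>" "wf_form S ar FA \<xi>" "fv \<xi> \<subseteq> {..<length a}"
    "sat FR empty_str (asg a) \<xi> \<noteq> sat FR empty_str (asg b) \<xi>" unfolding sim_def by blast
  define Sep where "Sep = (\<lambda>\<xi>. pure \<xi> \<and> wf_form S ar FA \<xi> \<and> fv \<xi> \<subseteq> {..<length a} \<and>
       sat FR empty_str (asg a) \<xi> \<and> \<not> sat FR empty_str (asg b) \<xi>)"
  have "Sep (if sat FR empty_str (asg a) \<xi> then \<xi> else Neg \<xi>)"
    using \<xi> unfolding Sep_def by auto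
  then have "Sep (Eps Sep)" by (rule someI)
  moreover have "separator a b = Eps Sep" unfolding separator_def Sep_def by (rule if_P[OF True])
  ultimately have "Sep (separator a b)" by simp
  then show ?thesis unfolding Sep_def by blast
next
  case False
  then have "separator a b = FTrue" unfolding separator_def by (rule if_not_P)
  then show ?thesis using False by simp
qed

lemma sat_invariant:
  assumes g: "g \<in> G" shows "pure \<xi> \<Longrightarrow> sat FR M (g \<circ> e) \<xi> = sat FR M e \<xi>"
proof (induction \<xi> arbitrary: e)
  case (FRel i vs)
  then show ?case using G_preserves[OF g, of "map e vs" i] by (simp add: o_def)
next
  case (Eq u v) then show ?case using G_inj[OF g] by (simp add: inj_eq)
next
  case (Neg \<phi>)
  have "sat FR M (g \<circ> e) \<phi> = sat FR M e \<phi>" by (rule Neg.IH) (use Neg.prems in simp)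
  then show ?case by (simp only: sat.simps)
next
  case (BigAnd f)
  have "sat FR M (g \<circ> e) (f n) = sat FR M e (f n)" for n by (rule BigAnd.IH) (use BigAnd.prems in auto)
  then show ?case by (simp only: sat.simps)
next
  case (BigOr f)
  have "sat FR M (g \<circ> e) (f n) = sat FR M e (f n)" for n by (rule BigOr.IH) (use BigOr.prems in auto)
  then show ?case by (simp only: sat.simps)
next
  case (Ex v \<phi>)
  have IH: "sat FR M ((g \<circ> e)(v := g a)) \<phi> = sat FR M (e(v := a)) \<phi>" for a
    using Ex.IH[of "e(v := a)"] Ex.prems by (simp only: fun_upd_comp pure.simps)
  have "(\<exists>b. sat FR M ((g \<circ> e)(v := b)) \<phi>) \<longleftrightarrow> (\<exists>a. sat FR M ((g \<circ> e)(v := g a)) \<phi>)"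
    using G_surj[OF g] by (metis surjD)
  then show ?case using IH by (simp only: sat.simps)
next
  case (All v \<phi>)
  have IH: "sat FR M ((g \<circ> e)(v := g a)) \<phi> = sat FR M (e(v := a)) \<phi>" for a
    using All.IH[of "e(v := a)"] All.prems by (simp only: fun_upd_comp pure.simps)
  have "(\<forall>b. sat FR M ((g \<circ> e)(v := b)) \<phi>) \<longleftrightarrow> (\<forall>a. sat FR M ((g \<circ> e)(v := g a)) \<phi>)"
    using G_surj[OF g] by (metis surjD)
  then show ?case using IH by (simp only: sat.simps)
qed simp

text \<open>Otherwise the separators of a @ [c] from the extensions of b give a pure formula
  (exists x. AND_d separator_d) true of a and false of b.\<close>
lemma sim_ext:
  assumes ab: "sim a b" shows "\<exists>d. sim (a @ [c]) (b @ [d])"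
proof (rule ccontr)
  assume H: "\<nexists>d. sim (a @ [c]) (b @ [d])"
  define m where "m = length a"
  have lb: "length b = m" using ab unfolding sim_def m_def by simp
  define chi where "chi d = separator (a @ [c]) (b @ [d])" for d
  have chi: "pure (chi d)" "wf_form S ar FA (chi d)" "fv (chi d) \<subseteq> {..<Suc m}"
    "sat FR empty_str (asg (a @ [c])) (chi d)" "\<not> sat FR empty_str (asg (b @ [d])) (chi d)" for d
    using separator[of "a @ [c]" "b @ [d]"] H lb unfolding chi_def m_def by auto
  define \<Phi> where "\<Phi> = Ex m (BigAnd chi)"
  have \<Phi>: "pure \<Phi>" "wf_form S ar FA \<Phi>" "fv \<Phi> \<subseteq> {..<length a}"
    using chi unfolding \<Phi>_def m_def by fastforce+
  have snoc: "sat FR empty_str ((asg x)(m := y)) (chi d) = sat FR empty_str (asg (x @ [y])) (chi d)"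
    if "length x = m" for x y d
  proof (rule sat_cong)
    fix v assume "v \<in> fv (chi d)"
    then have "v < Suc (length x)" using chi(3)[of d] that by auto
    then show "((asg x)(m := y)) v = asg (x @ [y]) v" using asg_snoc[of v x y] that by simp
  qed
  have "sat FR empty_str (asg a) \<Phi>"
    unfolding \<Phi>_def using snoc[of a c] chi(4) m_def by (auto intro!: exI[of _ c])
  then have "sat FR empty_str (asg b) \<Phi>" using ab \<Phi> unfolding sim_def by blast
  then obtain d where "\<forall>k. sat FR empty_str ((asg b)(m := d)) (chi k)" unfolding \<Phi>_def by auto
  then have "sat FR empty_str (asg (b @ [d])) (chi d)" using snoc[OF lb] by blast
  then show False using chi(5) by blast
qed

lemma sim_Eq:
  assumes "sim a b" "i < length a" "j < length a"
  shows "a ! i = a ! j \<longleftrightarrow> b ! i = b ! j"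
proof -
  have "sat FR empty_str (asg a) (Eq i j) \<longleftrightarrow> sat FR empty_str (asg b) (Eq i j)"
    by (rule sim_D) (use assms in auto)
  moreover have "length b = length a" using assms unfolding sim_def by simp
  ultimately show ?thesis using assms by (simp add: asg_def)
qed

lemma sim_FRel:
  assumes ab: "sim a b" and ps: "\<forall>p\<in>set ps. p < length a"
  shows "map (\<lambda>p. a ! p) ps \<in> FR i \<longleftrightarrow> map (\<lambda>p. b ! p) ps \<in> FR i"
proof (cases "length ps = FA i")
  case True
  have "sat FR empty_str (asg a) (FRel i ps) \<longleftrightarrow> sat FR empty_str (asg b) (FRel i ps)"
    by (rule sim_D) (use ab ps True in auto)
  moreover have "length b = length a" using ab unfolding sim_def by simp
  moreover have "map (asg a) ps = map (\<lambda>p. a ! p) ps" "map (asg b) ps = map (\<lambda>p. b ! p) ps"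
    using ps calculation(2) by (auto simp: asg_def)
  ultimately show ?thesis by simp
next
  case False
  then show ?thesis using FR_sub[of i] by (auto simp: tuples_def)
qed

lemma sim_extend:
  assumes ab: "sim a b"
  shows "\<exists>a' b'. sim a' b' \<and> prefix a a' \<and> prefix b b' \<and> k \<in> set a' \<and> k \<in> set b'"
proof -
  have forth: "\<exists>a' b'. sim a' b' \<and> prefix a a' \<and> prefix b b' \<and> k \<in> set a'"
    if ab': "sim a b" for a b
  proof (cases "k \<in> set a")
    case True
    then show ?thesis using ab' prefix_order.refl by blast
  next
    case False
    obtain d where "sim (a @ [k]) (b @ [d])" using sim_ext[OF ab'] by blast
    then show ?thesis by (intro exI[of _ "a @ [k]"] exI[of _ "b @ [d]"]) (auto simp: prefix_def)
  qed
  obtain a1 b1 where 1: "sim a1 b1" "prefix a a1" "prefix b b1" "k \<in> set a1"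
    using forth[OF ab] by blast
  obtain b2 a2 where 2: "sim b2 a2" "prefix b1 b2" "prefix a1 a2" "k \<in> set b2"
    using forth[OF sim_sym[OF 1(1)]] by blast
  have "prefix a a2" "prefix b b2"
    using prefix_order.trans[OF 1(2) 2(3)] prefix_order.trans[OF 1(3) 2(2)] by blast+
  moreover have "k \<in> set a2" using 1(4) 2(3) set_mono_prefix by blast
  ultimately show ?thesis using 2 sim_sym by blast
qed

lemma sim_chain:
  assumes ab: "sim a b"
  obtains A B where "A 0 = a" "B 0 = b" "\<And>k. sim (A k) (B k)"
    "\<And>k. prefix (A k) (A (Suc k))" "\<And>k. prefix (B k) (B (Suc k))"
    "\<And>k. k \<in> set (A (Suc k))" "\<And>k. k \<in> set (B (Suc k))"
proof -
  define P where "P k p \<longleftrightarrow> sim (fst p) (snd p) \<and> (k = 0 \<longrightarrow> p = (a, b))" for k :: nat and p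
  define Q where "Q k p p' \<longleftrightarrow> prefix (fst p) (fst p') \<and> prefix (snd p) (snd p') \<and>
    k \<in> set (fst p') \<and> k \<in> set (snd p')" for k :: nat and p p'
  have "\<exists>f. \<forall>k. P k (f k) \<and> Q k (f k) (f (Suc k))"
  proof (rule dependent_nat_choice)
    show "\<exists>p. P 0 p" using ab unfolding P_def by auto
  next
    fix p and k :: nat assume "P k p"
    then obtain a' b' where "sim a' b'" "prefix (fst p) a'" "prefix (snd p) b'" "k \<in> set a'" "k \<in> set b'"
      using sim_extend[of "fst p" "snd p" k] unfolding P_def by blast
    then show "\<exists>p'. P (Suc k) p' \<and> Q k p p'"
      unfolding P_def Q_def by (intro exI[of _ "(a', b')"]) simp
  qed
  then obtain f where f: "\<And>k. P k (f k)" "\<And>k. Q k (f k) (f (Suc k))" by blast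
  show ?thesis
    by (rule that[of "\<lambda>k. fst (f k)" "\<lambda>k. snd (f k)"]) (use f in \<open>auto simp: P_def Q_def\<close>)
qed

text \<open>Tuples of the same type are conjugate under G: the chain of sim_chain determines a
  bijection, which preserves F because every tuple of F is read off both sides of one pair.\<close>
theorem sim_conjugate:
  assumes ab: "sim a b"
  shows "\<exists>g\<in>G. \<forall>i<length a. g (a ! i) = b ! i"
proof -
  obtain A B where AB0: "A 0 = a" "B 0 = b" and sim_AB: "\<And>k. sim (A k) (B k)"
    and stepA: "\<And>k. prefix (A k) (A (Suc k))" and stepB: "\<And>k. prefix (B k) (B (Suc k))"
    and exhA: "\<And>k. k \<in> set (A (Suc k))" and exhB: "\<And>k. k \<in> set (B (Suc k))"
    using sim_chain[OF ab] by blast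
  have "\<exists>g. bij g \<and> (\<forall>k i. i < length (A k) \<longrightarrow> g (A k ! i) = B k ! i)"
  proof (rule chain_correspondence[OF stepA stepB _ _ exhA exhB])
    show "\<And>k. length (A k) = length (B k)" using sim_AB unfolding sim_def by blast
    show "\<And>k i j. i < length (A k) \<Longrightarrow> j < length (A k) \<Longrightarrow> A k ! i = A k ! j \<longleftrightarrow> B k ! i = B k ! j"
      using sim_Eq[OF sim_AB] by blast
  qed
  then obtain g where g: "bij g" "\<And>k i. i < length (A k) \<Longrightarrow> g (A k ! i) = B k ! i" by blast
  have "g \<in> G"
  proof (rule Aut_intro[OF g(1)])
    fix i xs
    define K where "K = Suc (sum_list xs)"
    have "x \<in> set (A K)" if "x \<in> set xs" for x
      using prefix_chain_set[of A, OF stepA exhA] set_less_Suc_sum_list[OF that] unfolding K_def by simp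
    then obtain ps where ps: "\<forall>p\<in>set ps. p < length (A K)" "xs = map (\<lambda>p. A K ! p) ps"
      using list_positions[of xs "A K"] by blast
    then have "map g xs = map (\<lambda>p. B K ! p) ps" using g(2) by simp
    then have "map g xs \<in> FR i \<longleftrightarrow> map (\<lambda>p. A K ! p) ps \<in> FR i" using sim_FRel[OF sim_AB ps(1)] by simp
    then show "map g xs \<in> FR i \<longleftrightarrow> xs \<in> FR i" using ps(2) by simp
  qed
  moreover have "\<forall>i<length a. g (a ! i) = b ! i" using g(2)[of _ 0] unfolding AB0 by blast
  ultimately show ?thesis by blast
qed

lemma valid_sim: "valid q \<longleftrightarrow> sim [0..<length q] q"
proof
  assume "valid q"
  then obtain g where g: "g \<in> N q" unfolding valid_def by blast
  have gG: "g \<in> G" using g N_sub by blast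
  show "sim [0..<length q] q" unfolding sim_def
  proof (intro conjI allI impI)
    fix \<xi> assume p: "pure \<xi>" and f: "fv \<xi> \<subseteq> {..<length [0..<length q]}"
    have "sat FR empty_str (asg [0..<length q]) \<xi> = sat FR empty_str (g \<circ> asg [0..<length q]) \<xi>"
      using sat_invariant[OF gG p] by simp
    also have "\<dots> = sat FR empty_str (asg q) \<xi>"
    proof (rule sat_cong)
      fix v assume "v \<in> fv \<xi>"
      then have "v < length q" using f by auto
      then show "(g \<circ> asg [0..<length q]) v = asg q v" using N_nth[OF g] by (simp add: asg_def)
    qed
    finally show "sat FR empty_str (asg [0..<length q]) \<xi> = sat FR empty_str (asg q) \<xi>" .
  qed simp
next
  assume "sim [0..<length q] q"
  then obtain g where "g \<in> G" "\<forall>i<length q. g ([0..<length q] ! i) = q ! i"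
    using sim_conjugate by fastforce
  then have "g \<in> N q" by (simp add: N_iff)
  then show "valid q" unfolding valid_def by blast
qed

text \<open>The formula psi n, in the pure language, defines validity of n-tuples: it is the
  conjunction of the separators of [0, ..., n-1] from all tuples of another type.\<close>
definition psi :: "nat \<Rightarrow> form" where
  "psi n = BigAnd (\<lambda>k. separator [0..<n] (from_nat k))"

lemma expresses_psi: "expresses n (psi n) (\<lambda>M q. valid q)"
proof -
  define ch where "ch k = separator [0..<n] (from_nat k)" for k
  have ch: "pure (ch k)" "wf_form S ar FA (ch k)" "fv (ch k) \<subseteq> {..<n}"
    "sat FR empty_str (asg [0..<n]) (ch k)"
    "length (from_nat k :: nat list) = n \<Longrightarrow> \<not> sim [0..<n] (from_nat k) \<Longrightarrow>
       \<not> sat FR empty_str (asg (from_nat k)) (ch k)" for k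
    using separator[of "[0..<n]" "from_nat k"] unfolding ch_def by auto
  have to_pure: "sat FR M e (ch k) = sat FR empty_str (asg (map e [0..<n])) (ch k)" for M e k
  proof -
    have "sat FR M e (ch k) = sat FR M (asg (map e [0..<n])) (ch k)"
    proof (rule sat_cong)
      fix v assume "v \<in> fv (ch k)" then have "v < n" using ch(3)[of k] by auto
      then show "e v = asg (map e [0..<n]) v" by (simp add: asg_def)
    qed
    also have "\<dots> = sat FR empty_str (asg (map e [0..<n])) (ch k)" using ch(1) sat_pure by blast
    finally show ?thesis .
  qed
  have "sat FR M e (BigAnd ch) \<longleftrightarrow> valid q" if q: "q = map e [0..<n]" for M e q
  proof
    assume a: "sat FR M e (BigAnd ch)"
    show "valid q"
    proof (rule ccontr)
      assume "\<not> valid q"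
      have "sat FR M e (ch (to_nat q))" using a by simp
      then have "sat FR empty_str (asg q) (ch (to_nat q))" using to_pure[of M e "to_nat q"] q by simp
      moreover have "\<not> sim [0..<n] q" using \<open>\<not> valid q\<close> valid_sim q by simp
      ultimately show False using ch(5)[of "to_nat q"] q by simp
    qed
  next
    assume "valid q"
    then have s: "sim [0..<n] q" using valid_sim q by simp
    have "sat FR empty_str (asg q) (ch k)" for k
      using sim_D[OF s ch(1,2)] ch(3,4) by simp
    then have "sat FR M e (ch k)" for k using to_pure[of M e k] q by simp
    then show "sat FR M e (BigAnd ch)" by simp
  qed
  moreover have "wf_form S ar FA (BigAnd ch)" "fv (BigAnd ch) \<subseteq> {..<n}" using ch(2,3) by auto
  ultimately show ?thesis unfolding expresses_def psi_def ch_def[symmetric] by blast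
qed

lemma X_eq: "X = (\<Pi>\<^sub>E R\<in>S. \<Pi>\<^sub>E xs\<in>tuples (ar R). (UNIV :: bool set))"
  by (simp add: logic_space_def)

text \<open>Left action of h^{-1}: the structure transported so that h becomes an isomorphism.\<close>
definition act :: "(nat \<Rightarrow> nat) \<Rightarrow> (nat \<Rightarrow> nat list \<Rightarrow> bool) \<Rightarrow> (nat \<Rightarrow> nat list \<Rightarrow> bool)" where
  "act h M = (\<lambda>R\<in>S. \<lambda>xs\<in>tuples (ar R). M R (map h xs))"

lemma act_X: "act h M \<in> X" unfolding X_eq act_def by auto

lemma perm_act_inv:
  assumes h: "h \<in> G" shows "perm_act S ar (inv h) M = act h M"
proof -
  have b: "bij h" using h by (simp add: Aut_def)
  have "(xs \<in> map (inv h) ` {ys. M R ys}) \<longleftrightarrow> M R (map h xs)" for R xs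
  proof
    assume "xs \<in> map (inv h) ` {ys. M R ys}"
    then obtain ys where "M R ys" "xs = map (inv h) ys" by blast
    moreover have "map h (map (inv h) ys) = ys" using bij_is_surj[OF b] by (simp add: map_idI surj_f_inv_f)
    ultimately show "M R (map h xs)" by simp
  next
    assume "M R (map h xs)"
    moreover have "map (inv h) (map h xs) = xs" using bij_is_inj[OF b] by (simp add: map_idI)
    ultimately show "xs \<in> map (inv h) ` {ys. M R ys}" by (metis (mono_tags) imageI mem_Collect_eq)
  qed
  then show ?thesis unfolding perm_act_def act_def by simp
qed

lemma act_inj:
  assumes h: "h \<in> G" and M: "M \<in> X" and M': "M' \<in> X" and e: "act h M = act h M'"
  shows "M = M'"
proof -
  have "M R xs = M' R xs" if R: "R \<in> S" and xs: "xs \<in> tuples (ar R)" for R xs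
  proof -
    have xs': "map (inv h) xs \<in> tuples (ar R)" using xs by (simp add: tuples_def)
    have "map h (map (inv h) xs) = xs" using G_surj[OF h] by (simp add: map_idI surj_f_inv_f)
    then show ?thesis using fun_cong[OF fun_cong[OF e, of R], of "map (inv h) xs"] R xs'
      unfolding act_def by simp
  qed
  note agree = this
  show ?thesis
  proof (intro ext)
    fix R xs
    show "M R xs = M' R xs"
    proof (cases "R \<in> S \<and> xs \<in> tuples (ar R)")
      case True
      then show ?thesis using agree by blast
    next
      case out: False
      show ?thesis
      proof (cases "R \<in> S")
        case True
        then have "M R \<in> extensional (tuples (ar R))" "M' R \<in> extensional (tuples (ar R))"
          using M M' unfolding X_eq by (auto simp: PiE_def)
        then show ?thesis using out True by (simp add: extensional_def)
      next
        case False
        then show ?thesis using M M' unfolding X_eq by (auto simp: PiE_def extensional_def)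
      qed
    qed
  qed
qed

text \<open>Cylinder sets: a finite list c of conditions (R, xs, b), meaning "R holds of xs iff b".\<close>
definition wf_conds :: "(nat \<times> nat list \<times> bool) list \<Rightarrow> bool" where
  "wf_conds c \<longleftrightarrow> (\<forall>R xs b. (R, xs, b) \<in> set c \<longrightarrow> R \<in> S \<and> length xs = ar R)"

definition cylinder :: "(nat \<times> nat list \<times> bool) list \<Rightarrow> (nat \<Rightarrow> nat list \<Rightarrow> bool) set" where
  "cylinder c = {M \<in> X. \<forall>R xs b. (R, xs, b) \<in> set c \<longrightarrow> M R xs = b}"

lemma act_cylinder:
  assumes w: "wf_conds c"
  shows "act h M \<in> cylinder c \<longleftrightarrow> (\<forall>R xs b. (R, xs, b) \<in> set c \<longrightarrow> M R (map h xs) = b)"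
proof -
  have e: "act h M R xs = M R (map h xs)" if "(R, xs, b) \<in> set c" for R xs b
    using w that unfolding wf_conds_def act_def tuples_def by auto
  have "act h M \<in> cylinder c \<longleftrightarrow> (\<forall>R xs b. (R, xs, b) \<in> set c \<longrightarrow> act h M R xs = b)"
    unfolding cylinder_def using act_X by simp
  also have "\<dots> \<longleftrightarrow> (\<forall>R xs b. (R, xs, b) \<in> set c \<longrightarrow> M R (map h xs) = b)"
    using e by metis
  finally show ?thesis .
qed

definition cond_bound :: "(nat \<times> nat list \<times> bool) list \<Rightarrow> nat" where
  "cond_bound c = Suc (sum_list (map (\<lambda>(R, xs, b). sum_list xs) c))"

lemma cond_bound: "(R, xs, b) \<in> set c \<Longrightarrow> x \<in> set xs \<Longrightarrow> x < cond_bound c"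
proof -
  assume a: "(R, xs, b) \<in> set c" "x \<in> set xs"
  have "x \<le> sum_list xs" using a(2) by (rule member_le_sum_list) simp
  moreover have "sum_list xs \<in> set (map (\<lambda>(R, xs, b). sum_list xs) c)" using a(1) by force
  then have "sum_list xs \<le> sum_list (map (\<lambda>(R, xs, b). sum_list xs) c)" by (rule member_le_sum_list) simp
  ultimately show ?thesis unfolding cond_bound_def by simp
qed

end

lemma discrete_product_cylinder:
  assumes V: "openin (product_topology (\<lambda>_. discrete_topology (UNIV :: 'b set)) I) V" and f: "f \<in> V"
  shows "\<exists>T. finite T \<and> T \<subseteq> I \<and> (\<forall>f'\<in>(\<Pi>\<^sub>E i\<in>I. UNIV). (\<forall>i\<in>T. f' i = f i) \<longrightarrow> f' \<in> V)"
proof -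
  have "\<exists>W. finite {i \<in> I. W i \<noteq> topspace (discrete_topology (UNIV :: 'b set))} \<and>
      (\<forall>i\<in>I. openin (discrete_topology UNIV) (W i)) \<and> f \<in> Pi\<^sub>E I W \<and> Pi\<^sub>E I W \<subseteq> V"
    using V f unfolding openin_product_topology_alt by (rule bspec)
  then obtain W where W: "finite {i \<in> I. W i \<noteq> UNIV}" "f \<in> Pi\<^sub>E I W" "Pi\<^sub>E I W \<subseteq> V"
    by auto
  have "f' \<in> V" if "f' \<in> (\<Pi>\<^sub>E i\<in>I. UNIV)" "\<forall>i\<in>{i \<in> I. W i \<noteq> UNIV}. f' i = f i" for f'
  proof -
    have "f' \<in> Pi\<^sub>E I W" using that W(2) by (auto simp: PiE_iff)
    then show ?thesis using W(3) by blast
  qed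
  then show ?thesis using W(1) by (intro exI[of _ "{i \<in> I. W i \<noteq> UNIV}"]) blast
qed

context fixed_family
begin

lemma open_finite_support:
  assumes U: "openin (logic_space S ar) U" and M: "M \<in> U"
  shows "\<exists>D. finite D \<and> D \<subseteq> Sigma S (\<lambda>R. tuples (ar R)) \<and>
    (\<forall>M'\<in>X. (\<forall>(R, xs)\<in>D. M' R xs = M R xs) \<longrightarrow> M' \<in> U)"
proof -
  define inner where "inner R = product_topology (\<lambda>xs. discrete_topology (UNIV :: bool set)) (tuples (ar R))" for R
  have "\<exists>V. finite {R \<in> S. V R \<noteq> topspace (inner R)} \<and> (\<forall>R\<in>S. openin (inner R) (V R)) \<and>
      M \<in> Pi\<^sub>E S V \<and> Pi\<^sub>E S V \<subseteq> U"
    using U M unfolding logic_space_def inner_def[symmetric] openin_product_topology_alt by (rule bspec)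
  then obtain V where V: "finite {R \<in> S. V R \<noteq> topspace (inner R)}" "\<forall>R\<in>S. openin (inner R) (V R)"
    "M \<in> Pi\<^sub>E S V" "Pi\<^sub>E S V \<subseteq> U"
    by blast
  have "\<forall>R\<in>S. \<exists>T. finite T \<and> T \<subseteq> tuples (ar R) \<and>
      (\<forall>f'\<in>(\<Pi>\<^sub>E xs\<in>tuples (ar R). UNIV). (\<forall>xs\<in>T. f' xs = M R xs) \<longrightarrow> f' \<in> V R)"
  proof
    fix R assume "R \<in> S"
    then have "openin (inner R) (V R)" "M R \<in> V R" using V(2,3) by auto
    then show "\<exists>T. finite T \<and> T \<subseteq> tuples (ar R) \<and>
      (\<forall>f'\<in>(\<Pi>\<^sub>E xs\<in>tuples (ar R). UNIV). (\<forall>xs\<in>T. f' xs = M R xs) \<longrightarrow> f' \<in> V R)"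
      unfolding inner_def by (rule discrete_product_cylinder)
  qed
  then obtain T where "\<forall>R\<in>S. finite (T R) \<and> T R \<subseteq> tuples (ar R) \<and>
      (\<forall>f'\<in>(\<Pi>\<^sub>E xs\<in>tuples (ar R). UNIV). (\<forall>xs\<in>T R. f' xs = M R xs) \<longrightarrow> f' \<in> V R)"
    by (rule bchoice[elim_format]) blast
  then have T: "\<And>R. R \<in> S \<Longrightarrow> finite (T R)" "\<And>R. R \<in> S \<Longrightarrow> T R \<subseteq> tuples (ar R)"
    "\<And>R f'. R \<in> S \<Longrightarrow> f' \<in> (\<Pi>\<^sub>E xs\<in>tuples (ar R). UNIV) \<Longrightarrow> (\<forall>xs\<in>T R. f' xs = M R xs) \<Longrightarrow> f' \<in> V R"
    by blast+
  define F1 where "F1 = {R \<in> S. V R \<noteq> topspace (inner R)}"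
  have "M' \<in> U" if M'X: "M' \<in> X" and agree: "\<forall>(R, xs)\<in>Sigma F1 T. M' R xs = M R xs" for M'
  proof -
    have "M' R \<in> V R" if R: "R \<in> S" for R
    proof (cases "R \<in> F1")
      case False
      then show ?thesis using M'X R unfolding F1_def X_eq inner_def by auto
    next
      case True
      then show ?thesis using T(3)[OF R] agree M'X R unfolding X_eq by blast
    qed
    then have "M' \<in> Pi\<^sub>E S V" using M'X unfolding X_eq by (auto simp: PiE_iff)
    then show "M' \<in> U" using V(4) by blast
  qed
  moreover have "finite (Sigma F1 T)" using V(1) T(1) unfolding F1_def by blast
  moreover have "Sigma F1 T \<subseteq> Sigma S (\<lambda>R. tuples (ar R))" using T(2) unfolding F1_def by blast
  ultimately show ?thesis by blast
qed

lemma open_cylinder: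
  assumes U: "openin (logic_space S ar) U" and M: "M \<in> U"
  shows "\<exists>c. wf_conds c \<and> M \<in> cylinder c \<and> cylinder c \<subseteq> U"
proof -
  obtain D where D: "finite D" "D \<subseteq> Sigma S (\<lambda>R. tuples (ar R))"
    "\<And>M'. M' \<in> X \<Longrightarrow> (\<forall>(R, xs)\<in>D. M' R xs = M R xs) \<Longrightarrow> M' \<in> U"
    using open_finite_support[OF U M] by blast
  obtain l where l: "set l = D" using finite_list[OF D(1)] by blast
  define c where "c = map (\<lambda>(R, xs). (R, xs, M R xs)) l"
  have sc: "set c = (\<lambda>(R, xs). (R, xs, M R xs)) ` D" unfolding c_def l[symmetric] by simp
  have "wf_conds c" unfolding wf_conds_def sc using D(2) by (auto simp: tuples_def)
  moreover have "M \<in> cylinder c" unfolding cylinder_def using U M openin_subset sc by auto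
  moreover have "cylinder c \<subseteq> U"
    using D(3) unfolding cylinder_def sc by fastforce
  ultimately show ?thesis by blast
qed

section \<open>Vaught transforms\<close>

definition hits :: "(nat \<Rightarrow> nat list \<Rightarrow> bool) \<Rightarrow> (nat \<Rightarrow> nat list \<Rightarrow> bool) set \<Rightarrow> (nat \<Rightarrow> nat) set" where
  "hits M B = {h \<in> G. act h M \<in> B}"

definition comeager_in :: "(nat \<Rightarrow> nat) set \<Rightarrow> nat list \<Rightarrow> bool" where
  "comeager_in C q \<longleftrightarrow> meager (N q - C)"

text \<open>Local form of the Baire property: below every basic set there is one in which
  C or its complement is comeager.\<close>
definition baire_prop :: "(nat \<Rightarrow> nat) set \<Rightarrow> bool" where
  "baire_prop C \<longleftrightarrow> (\<forall>q. valid q \<longrightarrow> (\<exists>r. prefix q r \<and> valid r \<and> (comeager_in C r \<or> comeager_in (G - C) r)))"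

definition vaught_definable :: "(nat \<Rightarrow> nat list \<Rightarrow> bool) set \<Rightarrow> bool" where
  "vaught_definable B \<longleftrightarrow> (\<forall>n. \<exists>\<phi>. expresses n \<phi> (\<lambda>M q. comeager_in (hits M B) q))"

definition good :: "(nat \<Rightarrow> nat list \<Rightarrow> bool) set \<Rightarrow> bool" where
  "good B \<longleftrightarrow> B \<subseteq> X \<and> (\<forall>M\<in>X. baire_prop (hits M B)) \<and> vaught_definable B \<and> vaught_definable (X - B)"

lemma hits_sub: "hits M B \<subseteq> G" unfolding hits_def by blast
lemma hits_compl: "hits M (X - B) = G - hits M B" unfolding hits_def using act_X by blast
lemma hits_UN: "hits M (\<Union>k. B k) = (\<Union>k. hits M (B k))" unfolding hits_def by blast

lemma comeager_mono: "C \<subseteq> D \<Longrightarrow> comeager_in C q \<Longrightarrow> comeager_in D q"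
  unfolding comeager_in_def by (metis Diff_mono meager_mono order_refl)

lemma not_comeager_empty: "valid q \<Longrightarrow> \<not> comeager_in {} q"
  unfolding comeager_in_def using baire by simp

lemma comeager_G: "comeager_in G q"
  unfolding comeager_in_def using N_sub meager_empty by (metis Diff_eq_empty_iff)

lemma prefix_all: "(\<forall>r. prefix q r \<longrightarrow> P r) \<longleftrightarrow> (\<forall>j w. length w = j \<longrightarrow> P (q @ w))"
  unfolding prefix_def by auto

lemma prefix_ex: "(\<exists>r. prefix q r \<and> P r) \<longleftrightarrow> (\<exists>j w. length w = j \<and> P (q @ w))"
  unfolding prefix_def by auto

lemma nonmeager_comeager:
  assumes CG: "C \<subseteq> G" and bp: "baire_prop C" and q: "valid q" and nm: "\<not> meager (C \<inter> N q)"
  shows "\<exists>r. prefix q r \<and> valid r \<and> comeager_in C r"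
proof (rule ccontr)
  assume H: "\<nexists>r. prefix q r \<and> valid r \<and> comeager_in C r"
  have "meager (C \<inter> N q)"
  proof (rule localize)
    fix r assume r: "prefix q r" "valid r"
    then obtain s where s: "prefix r s" "valid s" "comeager_in C s \<or> comeager_in (G - C) s"
      using bp unfolding baire_prop_def by blast
    have "prefix q s" using r(1) s(1) by (rule prefix_order.trans)
    then have "comeager_in (G - C) s" using H s(2,3) by blast
    moreover have "C \<inter> N s \<subseteq> N s - (G - C)" using CG by blast
    ultimately have "meager (C \<inter> N s)" unfolding comeager_in_def using meager_mono by blast
    then show "\<exists>s. prefix r s \<and> valid s \<and> meager (C \<inter> N s)" using s by blast
  qed
  then show False using nm by blast
qed

lemma baire_prop_compl: "C \<subseteq> G \<Longrightarrow> baire_prop C \<Longrightarrow> baire_prop (G - C)"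
  unfolding baire_prop_def by (metis double_diff order_refl)

lemma comeager_UN:
  fixes C :: "nat \<Rightarrow> (nat \<Rightarrow> nat) set"
  assumes CG: "\<And>k. C k \<subseteq> G" and bp: "\<And>k. baire_prop (C k)"
  shows "comeager_in (\<Union>k. C k) q \<longleftrightarrow>
    (\<forall>r. prefix q r \<longrightarrow> valid r \<longrightarrow> (\<exists>s. prefix r s \<and> valid s \<and> (\<exists>k. comeager_in (C k) s)))"
proof
  assume co: "comeager_in (\<Union>k. C k) q"
  show "\<forall>r. prefix q r \<longrightarrow> valid r \<longrightarrow> (\<exists>s. prefix r s \<and> valid s \<and> (\<exists>k. comeager_in (C k) s))"
  proof (intro allI impI)
    fix r assume r: "prefix q r" "valid r"
    show "\<exists>s. prefix r s \<and> valid s \<and> (\<exists>k. comeager_in (C k) s)"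
    proof (cases "\<exists>k. \<not> meager (C k \<inter> N r)")
      case True
      then obtain k where "\<not> meager (C k \<inter> N r)" by blast
      then show ?thesis using nonmeager_comeager[OF CG bp r(2)] by blast
    next
      case False
      have m1: "meager (\<Union>k. C k \<inter> N r)" by (rule meager_UN) (use False in blast)
      have "N r - (\<Union>k. C k) \<subseteq> N q - (\<Union>k. C k)" using N_mono[OF r(1)] by blast
      then have m2: "meager (N r - (\<Union>k. C k))" using co meager_mono unfolding comeager_in_def by blast
      have "N r \<subseteq> (\<Union>k. C k \<inter> N r) \<union> (N r - (\<Union>k. C k))" by blast
      then have "meager (N r)" using meager_Un[OF m1 m2] by (rule meager_mono)
      then show ?thesis using baire[OF r(2)] by blast
    qed
  qed
next
  assume H: "\<forall>r. prefix q r \<longrightarrow> valid r \<longrightarrow> (\<exists>s. prefix r s \<and> valid s \<and> (\<exists>k. comeager_in (C k) s))"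
  have "meager ((N q - (\<Union>k. C k)) \<inter> N q)"
  proof (rule localize)
    fix r assume "prefix q r" "valid r"
    then obtain s k where s: "prefix r s" "valid s" "comeager_in (C k) s" using H by blast
    have "(N q - (\<Union>k. C k)) \<inter> N s \<subseteq> N s - C k" by blast
    then have "meager ((N q - (\<Union>k. C k)) \<inter> N s)" using s(3) meager_mono unfolding comeager_in_def by blast
    then show "\<exists>s. prefix r s \<and> valid s \<and> meager ((N q - (\<Union>k. C k)) \<inter> N s)" using s by blast
  qed
  moreover have "(N q - (\<Union>k. C k)) \<inter> N q = N q - (\<Union>k. C k)" by blast
  ultimately show "comeager_in (\<Union>k. C k) q" unfolding comeager_in_def by simp
qed

lemma comeager_compl_UN:
  fixes C :: "nat \<Rightarrow> (nat \<Rightarrow> nat) set"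
  shows "comeager_in (G - (\<Union>k. C k)) q \<longleftrightarrow> (\<forall>k. comeager_in (G - C k) q)"
proof
  assume "comeager_in (G - (\<Union>k. C k)) q"
  then show "\<forall>k. comeager_in (G - C k) q" by (blast intro: comeager_mono[rotated])
next
  assume "\<forall>k. comeager_in (G - C k) q"
  then have "meager (\<Union>k. N q - (G - C k))" unfolding comeager_in_def by (blast intro: meager_UN)
  moreover have "N q - (G - (\<Union>k. C k)) \<subseteq> (\<Union>k. N q - (G - C k))" using N_sub[of q] by blast
  ultimately show "comeager_in (G - (\<Union>k. C k)) q" unfolding comeager_in_def using meager_mono by blast
qed

lemma baire_prop_UN:
  fixes C :: "nat \<Rightarrow> (nat \<Rightarrow> nat) set"
  assumes CG: "\<And>k. C k \<subseteq> G" and bp: "\<And>k. baire_prop (C k)"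
  shows "baire_prop (\<Union>k. C k)"
  unfolding baire_prop_def
proof (intro allI impI)
  fix q assume q: "valid q"
  show "\<exists>r. prefix q r \<and> valid r \<and> (comeager_in (\<Union>k. C k) r \<or> comeager_in (G - (\<Union>k. C k)) r)"
  proof (cases "\<exists>k. \<not> meager (C k \<inter> N q)")
    case True
    then obtain k r where r: "prefix q r" "valid r" "comeager_in (C k) r"
      using nonmeager_comeager[OF CG bp q] by blast
    have "C k \<subseteq> (\<Union>k. C k)" by blast
    then have "comeager_in (\<Union>k. C k) r" using r(3) by (rule comeager_mono)
    then show ?thesis using r by blast
  next
    case False
    have "meager (\<Union>k. C k \<inter> N q)" by (rule meager_UN) (use False in blast)
    moreover have "N q - (G - (\<Union>k. C k)) \<subseteq> (\<Union>k. C k \<inter> N q)" using N_sub[of q] by blast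
    ultimately have "comeager_in (G - (\<Union>k. C k)) q" unfolding comeager_in_def using meager_mono by blast
    then show ?thesis using q prefix_order.refl by blast
  qed
qed

lemma good_compl:
  assumes "good B" shows "good (X - B)"
proof -
  have "X - (X - B) = B" using assms unfolding good_def by blast
  moreover have "baire_prop (hits M (X - B))" if "M \<in> X" for M
    unfolding hits_compl using baire_prop_compl[OF hits_sub] assms that unfolding good_def by blast
  ultimately show ?thesis using assms unfolding good_def by auto
qed

lemma vaught_definable_compl_UN:
  fixes B :: "nat \<Rightarrow> (nat \<Rightarrow> nat list \<Rightarrow> bool) set"
  assumes "\<And>k. vaught_definable (X - B k)"
  shows "vaught_definable (X - (\<Union>k. B k))"
  unfolding vaught_definable_def
proof
  fix n
  have "\<forall>k. \<exists>\<phi>. expresses n \<phi> (\<lambda>M q. comeager_in (hits M (X - B k)) q)"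
    using assms unfolding vaught_definable_def by blast
  then obtain \<phi> where "\<forall>k. expresses n (\<phi> k) (\<lambda>M q. comeager_in (hits M (X - B k)) q)"
    by (rule choice_iff[THEN iffD1, elim_format]) blast
  then have "expresses n (BigAnd \<phi>) (\<lambda>M q. \<forall>k. comeager_in (hits M (X - B k)) q)"
    by (intro expresses_BigAnd) blast
  then have "expresses n (BigAnd \<phi>) (\<lambda>M q. comeager_in (hits M (X - (\<Union>k. B k))) q)"
    by (rule expresses_cong) (simp add: hits_compl hits_UN comeager_compl_UN)
  then show "\<exists>\<phi>. expresses n \<phi> (\<lambda>M q. comeager_in (hits M (X - (\<Union>k. B k))) q)" by blast
qed

text \<open>Transforms of a union: every extension of q has an extension in which some B k is
  comeager, a formula with quantifier blocks over the extensions.\<close>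
lemma vaught_definable_UN:
  fixes B :: "nat \<Rightarrow> (nat \<Rightarrow> nat list \<Rightarrow> bool) set"
  assumes def: "\<And>k. vaught_definable (B k)" and bp: "\<And>M k. M \<in> X \<Longrightarrow> baire_prop (hits M (B k))"
  shows "vaught_definable (\<Union>k. B k)"
  unfolding vaught_definable_def
proof
  fix n
  have "\<forall>k. \<exists>f. \<forall>m. expresses m (f m) (\<lambda>M q. comeager_in (hits M (B k)) q)"
  proof
    fix k
    have "\<forall>m. \<exists>\<phi>. expresses m \<phi> (\<lambda>M q. comeager_in (hits M (B k)) q)"
      using def[of k] unfolding vaught_definable_def by blast
    then show "\<exists>f. \<forall>m. expresses m (f m) (\<lambda>M q. comeager_in (hits M (B k)) q)" by (rule choice)
  qed
  then obtain \<phi> where "\<forall>k m. expresses m (\<phi> k m) (\<lambda>M q. comeager_in (hits M (B k)) q)"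
    by (rule choice_iff[THEN iffD1, elim_format]) blast
  then have \<phi>: "\<And>k m. expresses m (\<phi> k m) (\<lambda>M q. comeager_in (hits M (B k)) q)" by blast
  define some_ext where "some_ext j = BigOr (\<lambda>i. case prod_decode i of (j', k) \<Rightarrow>
      exs (n + j) j' (Conj (psi (n + j + j')) (\<phi> k (n + j + j'))))" for j
  have "expresses (n + j) (some_ext j) (\<lambda>M r. \<exists>j' k. \<exists>w. length w = j' \<and> valid (r @ w) \<and>
      comeager_in (hits M (B k)) (r @ w))" for j
    unfolding some_ext_def
    by (intro expresses_BigOr2 expresses_exs[where P="\<lambda>M r. valid r \<and> comeager_in (hits M (B _)) r"]
        expresses_Conj expresses_psi \<phi>[unfolded add.assoc])
  then have "expresses n (BigAnd (\<lambda>j. alls n j (Imp (psi (n + j)) (some_ext j))))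
      (\<lambda>M q. \<forall>j w. length w = j \<longrightarrow> valid (q @ w) \<longrightarrow>
        (\<exists>j' k. \<exists>w'. length w' = j' \<and> valid ((q @ w) @ w') \<and> comeager_in (hits M (B k)) ((q @ w) @ w')))"
    by (intro expresses_BigAnd expresses_alls[where P="\<lambda>M r. valid r \<longrightarrow> _ M r"] expresses_Imp expresses_psi)
  then have "expresses n (BigAnd (\<lambda>j. alls n j (Imp (psi (n + j)) (some_ext j))))
      (\<lambda>M q. comeager_in (hits M (\<Union>k. B k)) q)"
  proof (rule expresses_cong)
    fix M q assume M: "M \<in> X"
    have "comeager_in (hits M (\<Union>k. B k)) q \<longleftrightarrow>
        (\<forall>r. prefix q r \<longrightarrow> valid r \<longrightarrow> (\<exists>s. prefix r s \<and> valid s \<and> (\<exists>k. comeager_in (hits M (B k)) s)))"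
      unfolding hits_UN by (rule comeager_UN[OF hits_sub bp[OF M]])
    then show "(\<forall>j w. length w = j \<longrightarrow> valid (q @ w) \<longrightarrow>
        (\<exists>j' k. \<exists>w'. length w' = j' \<and> valid ((q @ w) @ w') \<and> comeager_in (hits M (B k)) ((q @ w) @ w'))) =
      comeager_in (hits M (\<Union>k. B k)) q"
      unfolding prefix_all prefix_ex by blast
  qed
  then show "\<exists>\<phi>. expresses n \<phi> (\<lambda>M q. comeager_in (hits M (\<Union>k. B k)) q)" by blast
qed

lemma good_UN:
  fixes B :: "nat \<Rightarrow> (nat \<Rightarrow> nat list \<Rightarrow> bool) set"
  assumes good: "\<And>k. good (B k)"
  shows "good (\<Union>k. B k)"
proof -
  have bp: "\<And>M k. M \<in> X \<Longrightarrow> baire_prop (hits M (B k))" using good unfolding good_def by blast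
  have "baire_prop (hits M (\<Union>k. B k))" if "M \<in> X" for M
    unfolding hits_UN by (rule baire_prop_UN[OF hits_sub bp[OF that]])
  moreover have "vaught_definable (\<Union>k. B k)"
    using good bp unfolding good_def by (blast intro: vaught_definable_UN)
  moreover have "vaught_definable (X - (\<Union>k. B k))"
    using good unfolding good_def by (blast intro: vaught_definable_compl_UN)
  moreover have "(\<Union>k. B k) \<subseteq> X" using good unfolding good_def by blast
  ultimately show ?thesis unfolding good_def by blast
qed

section \<open>Open sets are good\<close>

text \<open>The conditions c, read of the tuple r (variable i standing for r ! i), as a formula.\<close>
definition lit :: "nat \<times> nat list \<times> bool \<Rightarrow> form" where
  "lit x = (case x of (R, xs, b) \<Rightarrow> if b then Rel R xs else Neg (Rel R xs))"

definition theta :: "(nat \<times> nat list \<times> bool) list \<Rightarrow> form" where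
  "theta c = BigAnd (\<lambda>i. if i < length c then lit (c ! i) else FTrue)"

definition holds :: "(nat \<Rightarrow> nat list \<Rightarrow> bool) \<Rightarrow> nat list \<Rightarrow> (nat \<times> nat list \<times> bool) list \<Rightarrow> bool" where
  "holds M r c \<longleftrightarrow> (\<forall>R xs b. (R, xs, b) \<in> set c \<longrightarrow> M R (map (\<lambda>i. r ! i) xs) = b)"

definition covers :: "(nat \<times> nat list \<times> bool) list \<Rightarrow> nat \<Rightarrow> bool" where
  "covers c m \<longleftrightarrow> (\<forall>R xs b. (R, xs, b) \<in> set c \<longrightarrow> set xs \<subseteq> {..<m})"

lemma expresses_lit:
  assumes "R \<in> S" "length xs = ar R" "set xs \<subseteq> {..<m}"
  shows "expresses m (lit (R, xs, b)) (\<lambda>M r. M R (map (\<lambda>i. r ! i) xs) = b)"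
  unfolding expresses_def
proof (intro conjI ballI allI)
  show "wf_form S ar FA (lit (R, xs, b))" "fv (lit (R, xs, b)) \<subseteq> {..<m}"
    using assms by (simp_all add: lit_def)
  fix M :: "nat \<Rightarrow> nat list \<Rightarrow> bool" and e :: "nat \<Rightarrow> nat"
  have "map e xs = map (\<lambda>i. map e [0..<m] ! i) xs" using assms(3) by auto
  then have eq: "M R (map e xs) = M R (map (\<lambda>i. map e [0..<m] ! i) xs)" by (rule arg_cong)
  show "sat FR M e (lit (R, xs, b)) = (M R (map (\<lambda>i. map e [0..<m] ! i) xs) = b)"
    by (cases b) (simp_all add: lit_def eq[symmetric])
qed

lemma expresses_theta:
  assumes w: "wf_conds c" and cv: "covers c m"
  shows "expresses m (theta c) (\<lambda>M r. holds M r c)"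
proof -
  have "expresses m (if i < length c then lit (c ! i) else FTrue)
     (\<lambda>M r. i < length c \<longrightarrow> (case c ! i of (R, xs, b) \<Rightarrow> M R (map (\<lambda>i. r ! i) xs) = b))" for i
  proof (cases "i < length c")
    case True
    obtain R xs b where e: "c ! i = (R, xs, b)" by (cases "c ! i") auto
    then have "(R, xs, b) \<in> set c" using True nth_mem by metis
    then have "R \<in> S" "length xs = ar R" "set xs \<subseteq> {..<m}"
      using w cv unfolding wf_conds_def covers_def by blast+
    then show ?thesis using True e expresses_lit by simp
  next
    case False
    then show ?thesis using expresses_FTrue by simp
  qed
  then have "expresses m (theta c)
      (\<lambda>M r. \<forall>i<length c. case c ! i of (R, xs, b) \<Rightarrow> M R (map (\<lambda>i. r ! i) xs) = b)"
    unfolding theta_def by (intro expresses_BigAnd) simp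
  then show ?thesis
  proof (rule expresses_cong)
    fix M and r :: "nat list"
    have "holds M r c \<longleftrightarrow> (\<forall>x\<in>set c. case x of (R, xs, b) \<Rightarrow> M R (map (\<lambda>i. r ! i) xs) = b)"
      unfolding holds_def by auto
    then show "(\<forall>i<length c. case c ! i of (R, xs, b) \<Rightarrow> M R (map (\<lambda>i. r ! i) xs) = b) = holds M r c"
      by (simp add: all_set_conv_all_nth)
  qed
qed

text \<open>meets U M q: some valid extension of q realizes in M the conditions of a cylinder
  inside U, i.e. N q meets hits M U.\<close>
definition meets :: "(nat \<Rightarrow> nat list \<Rightarrow> bool) set \<Rightarrow> (nat \<Rightarrow> nat list \<Rightarrow> bool) \<Rightarrow> nat list \<Rightarrow> bool" where
  "meets U M q \<longleftrightarrow> (\<exists>j c w. wf_conds c \<and> cylinder c \<subseteq> U \<and> covers c (length q + j) \<and> length w = j \<and>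
     valid (q @ w) \<and> holds M (q @ w) c)"

definition meets_formula :: "(nat \<Rightarrow> nat list \<Rightarrow> bool) set \<Rightarrow> nat \<Rightarrow> form" where
  "meets_formula U n = BigOr (\<lambda>i. case prod_decode i of (j, k) \<Rightarrow>
     (if wf_conds (from_nat k) \<and> cylinder (from_nat k) \<subseteq> U \<and> covers (from_nat k) (n + j)
      then exs n j (Conj (psi (n + j)) (theta (from_nat k))) else FFalse))"

lemma expresses_meets: "expresses n (meets_formula U n) (\<lambda>M q. meets U M q)"
proof -
  define ok where "ok j k \<longleftrightarrow> wf_conds (from_nat k) \<and> cylinder (from_nat k) \<subseteq> U \<and> covers (from_nat k) (n + j)"
    for j k
  have "expresses n (if ok j k then exs n j (Conj (psi (n + j)) (theta (from_nat k))) else FFalse)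
     (\<lambda>M q. ok j k \<and> (\<exists>w. length w = j \<and> valid (q @ w) \<and> holds M (q @ w) (from_nat k)))" for j k
  proof (cases "ok j k")
    case True
    then have "expresses (n + j) (theta (from_nat k)) (\<lambda>M r. holds M r (from_nat k))"
      unfolding ok_def by (intro expresses_theta) auto
    then have "expresses n (exs n j (Conj (psi (n + j)) (theta (from_nat k))))
        (\<lambda>M q. \<exists>w. length w = j \<and> valid (q @ w) \<and> holds M (q @ w) (from_nat k))"
      by (intro expresses_exs[where P="\<lambda>M r. valid r \<and> holds M r (from_nat k)"] expresses_Conj expresses_psi)
    then show ?thesis using True by simp
  next
    case False then show ?thesis using expresses_FFalse by simp
  qed
  then have "expresses n (meets_formula U n)
      (\<lambda>M q. \<exists>j k. ok j k \<and> (\<exists>w. length w = j \<and> valid (q @ w) \<and> holds M (q @ w) (from_nat k)))"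
    unfolding meets_formula_def ok_def[symmetric] by (rule expresses_BigOr2)
  then show ?thesis
  proof (rule expresses_cong)
    fix M and q :: "nat list" assume "length q = n"
    show "(\<exists>j k. ok j k \<and> (\<exists>w. length w = j \<and> valid (q @ w) \<and> holds M (q @ w) (from_nat k))) = meets U M q"
    proof
      assume "\<exists>j k. ok j k \<and> (\<exists>w. length w = j \<and> valid (q @ w) \<and> holds M (q @ w) (from_nat k))"
      then show "meets U M q" unfolding meets_def ok_def \<open>length q = n\<close>[symmetric] by blast
    next
      assume "meets U M q"
      then obtain j c w where "wf_conds c" "cylinder c \<subseteq> U" "covers c (n + j)" "length w = j"
        "valid (q @ w)" "holds M (q @ w) c"
        unfolding meets_def \<open>length q = n\<close> by blast
      then have "ok j (to_nat c) \<and> (\<exists>w. length w = j \<and> valid (q @ w) \<and> holds M (q @ w) (from_nat (to_nat c)))"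
        unfolding ok_def by auto
      then show "\<exists>j k. ok j k \<and> (\<exists>w. length w = j \<and> valid (q @ w) \<and> holds M (q @ w) (from_nat k))"
        by blast
    qed
  qed
qed

lemma hits_open:
  assumes U: "openin (logic_space S ar) U" and h: "h \<in> hits M U"
  shows "\<exists>s. h \<in> N s \<and> N s \<subseteq> hits M U"
proof -
  have hG: "h \<in> G" and hU: "act h M \<in> U" using h unfolding hits_def by auto
  obtain c where c: "wf_conds c" "act h M \<in> cylinder c" "cylinder c \<subseteq> U"
    using open_cylinder[OF U hU] by blast
  define s where "s = map h [0..<cond_bound c]"
  have "N s \<subseteq> hits M U"
  proof
    fix h' assume h': "h' \<in> N s"
    have "M R (map h' xs) = b" if Rc: "(R, xs, b) \<in> set c" for R xs b
    proof -
      have "h' x = h x" if "x \<in> set xs" for x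
        using N_nth[OF h'] cond_bound[OF Rc that] unfolding s_def by simp
      then have "map h' xs = map h xs" by simp
      moreover have "M R (map h xs) = b" using c(1,2) act_cylinder Rc by blast
      ultimately show ?thesis by metis
    qed
    then have "act h' M \<in> cylinder c" using act_cylinder[OF c(1)] by blast
    then show "h' \<in> hits M U" using c(3) h' N_sub unfolding hits_def by blast
  qed
  moreover have "h \<in> N s" unfolding s_def by (rule in_N[OF hG])
  ultimately show ?thesis by blast
qed

lemma hits_meets:
  assumes U: "openin (logic_space S ar) U" and hq: "h \<in> N q" and h: "h \<in> hits M U"
  shows "meets U M q"
proof -
  have hG: "h \<in> G" and hU: "act h M \<in> U" using h unfolding hits_def by auto
  obtain c where c: "wf_conds c" "act h M \<in> cylinder c" "cylinder c \<subseteq> U"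
    using open_cylinder[OF U hU] by blast
  define L where "L = max (length q) (cond_bound c)"
  define r where "r = map h [0..<L]"
  have "q = map h [0..<length q]" using hq unfolding N_def by blast
  then have "prefix q r" using prefix_map_upt[of "length q" L h] unfolding r_def L_def by simp
  then obtain w where w: "r = q @ w" unfolding prefix_def by blast
  have "length q + length w = L" using w unfolding r_def by (metis diff_zero length_append length_map length_upt)
  then have "covers c (length q + length w)"
    unfolding covers_def L_def using cond_bound by fastforce
  moreover have "valid (q @ w)" using valid_map[OF hG] w unfolding r_def by metis
  moreover have "holds M (q @ w) c" unfolding holds_def
  proof (intro allI impI)
    fix R xs b assume Rc: "(R, xs, b) \<in> set c"
    have "r ! x = h x" if "x \<in> set xs" for x
      using cond_bound[OF Rc that] unfolding r_def L_def by simp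
    then have "map (\<lambda>i. r ! i) xs = map h xs" by simp
    moreover have "M R (map h xs) = b" using c(1,2) act_cylinder Rc by blast
    ultimately show "M R (map (\<lambda>i. (q @ w) ! i) xs) = b" using w by metis
  qed
  ultimately show ?thesis unfolding meets_def using c(1,3) by blast
qed

lemma meets_hits:
  assumes "meets U M q"
  shows "N q \<inter> hits M U \<noteq> {}"
proof -
  obtain j c w where c: "wf_conds c" "cylinder c \<subseteq> U" "covers c (length q + j)" "length w = j"
    "valid (q @ w)" "holds M (q @ w) c" using assms unfolding meets_def by blast
  obtain h where h: "h \<in> N (q @ w)" using c(5) unfolding valid_def by blast
  have "M R (map h xs) = b" if Rc: "(R, xs, b) \<in> set c" for R xs b
  proof -
    have "h x = (q @ w) ! x" if "x \<in> set xs" for x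
      using N_nth[OF h] c(3,4) Rc that unfolding covers_def by fastforce
    then have "map h xs = map (\<lambda>i. (q @ w) ! i) xs" by simp
    then show ?thesis using c(6) Rc unfolding holds_def by metis
  qed
  then have "act h M \<in> cylinder c" using act_cylinder[OF c(1)] by blast
  then have "h \<in> hits M U" using c(2) h N_sub unfolding hits_def by blast
  moreover have "h \<in> N q" using N_mono[OF prefixI[OF refl]] h by blast
  ultimately show ?thesis by blast
qed

lemma meets_iff:
  assumes U: "openin (logic_space S ar) U"
  shows "N q \<inter> hits M U \<noteq> {} \<longleftrightarrow> meets U M q"
  using hits_meets[OF U] meets_hits by blast

lemma open_refine:
  assumes U: "openin (logic_space S ar) U" and h: "h \<in> N q \<inter> hits M U"
  shows "\<exists>t. prefix q t \<and> valid t \<and> N t \<subseteq> hits M U \<inter> N q"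
proof -
  obtain s where s: "h \<in> N s" "N s \<subseteq> hits M U" using hits_open[OF U] h by blast
  obtain t where t: "prefix q t" "prefix s t" "h \<in> N t" using N_refine[of h q s] h s(1) by blast
  have "valid t" using t(3) unfolding valid_def by blast
  moreover have "N t \<subseteq> hits M U \<inter> N q" using N_mono[OF t(1)] N_mono[OF t(2)] s(2) by blast
  ultimately show ?thesis using t(1) by blast
qed

lemma comeager_open:
  assumes U: "openin (logic_space S ar) U"
  shows "comeager_in (hits M U) q \<longleftrightarrow> (\<forall>r. prefix q r \<longrightarrow> valid r \<longrightarrow> N r \<inter> hits M U \<noteq> {})"
proof
  assume co: "comeager_in (hits M U) q"
  show "\<forall>r. prefix q r \<longrightarrow> valid r \<longrightarrow> N r \<inter> hits M U \<noteq> {}"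
  proof (intro allI impI notI)
    fix r assume r: "prefix q r" "valid r" and e: "N r \<inter> hits M U = {}"
    have "N r \<subseteq> N q - hits M U" using N_mono[OF r(1)] e by blast
    then have "meager (N r)" using co meager_mono unfolding comeager_in_def by blast
    then show False using baire[OF r(2)] by blast
  qed
next
  assume H: "\<forall>r. prefix q r \<longrightarrow> valid r \<longrightarrow> N r \<inter> hits M U \<noteq> {}"
  have "meager ((N q - hits M U) \<inter> N q)"
  proof (rule localize)
    fix r assume r: "prefix q r" "valid r"
    then obtain h where "h \<in> N r \<inter> hits M U" using H by blast
    then obtain t where t: "prefix r t" "valid t" "N t \<subseteq> hits M U \<inter> N r"
      using open_refine[OF U] by blast
    have "(N q - hits M U) \<inter> N t = {}" using t(3) by blast
    then show "\<exists>s. prefix r s \<and> valid s \<and> meager ((N q - hits M U) \<inter> N s)"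
      using t(1,2) meager_empty by metis
  qed
  moreover have "(N q - hits M U) \<inter> N q = N q - hits M U" by blast
  ultimately show "comeager_in (hits M U) q" unfolding comeager_in_def by simp
qed

lemma comeager_compl_open:
  assumes U: "openin (logic_space S ar) U"
  shows "comeager_in (hits M (X - U)) q \<longleftrightarrow> N q \<inter> hits M U = {}"
proof
  assume co: "comeager_in (hits M (X - U)) q"
  show "N q \<inter> hits M U = {}"
  proof (rule ccontr)
    assume "N q \<inter> hits M U \<noteq> {}"
    then obtain t where t: "prefix q t" "valid t" "N t \<subseteq> hits M U \<inter> N q"
      using open_refine[OF U] by blast
    have "N t \<subseteq> N q - hits M (X - U)" using t(3) unfolding hits_compl by blast
    then have "meager (N t)" using co meager_mono unfolding comeager_in_def by blast
    then show False using baire[OF t(2)] by blast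
  qed
next
  assume "N q \<inter> hits M U = {}"
  then have "N q - hits M (X - U) = {}" unfolding hits_compl using N_sub[of q] by blast
  then show "comeager_in (hits M (X - U)) q" unfolding comeager_in_def by (simp only: meager_empty)
qed

lemma baire_prop_open:
  assumes U: "openin (logic_space S ar) U"
  shows "baire_prop (hits M U)"
  unfolding baire_prop_def
proof (intro allI impI)
  fix q assume q: "valid q"
  show "\<exists>r. prefix q r \<and> valid r \<and> (comeager_in (hits M U) r \<or> comeager_in (G - hits M U) r)"
  proof (cases "N q \<inter> hits M U = {}")
    case True
    then have "comeager_in (G - hits M U) q" using comeager_compl_open[OF U] unfolding hits_compl by blast
    then show ?thesis using q prefix_order.refl by blast
  next
    case False
    then obtain t where t: "prefix q t" "valid t" "N t \<subseteq> hits M U \<inter> N q"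
      using open_refine[OF U] by blast
    then have "N t - hits M U = {}" by blast
    then have "comeager_in (hits M U) t" unfolding comeager_in_def by (simp only: meager_empty)
    then show ?thesis using t(1,2) by blast
  qed
qed

lemma good_open:
  assumes U: "openin (logic_space S ar) U"
  shows "good U"
proof -
  have "vaught_definable U" unfolding vaught_definable_def
  proof
    fix n
    have "expresses n (BigAnd (\<lambda>j. alls n j (Imp (psi (n + j)) (meets_formula U (n + j)))))
        (\<lambda>M q. \<forall>j w. length w = j \<longrightarrow> valid (q @ w) \<longrightarrow> meets U M (q @ w))"
      by (intro expresses_BigAnd expresses_alls[where P="\<lambda>M q. valid q \<longrightarrow> meets U M q"]
          expresses_Imp expresses_psi expresses_meets)
    then have "expresses n (BigAnd (\<lambda>j. alls n j (Imp (psi (n + j)) (meets_formula U (n + j)))))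
        (\<lambda>M q. comeager_in (hits M U) q)"
      by (rule expresses_cong) (simp add: comeager_open[OF U] meets_iff[OF U] prefix_all)
    then show "\<exists>\<phi>. expresses n \<phi> (\<lambda>M q. comeager_in (hits M U) q)" by blast
  qed
  moreover have "vaught_definable (X - U)" unfolding vaught_definable_def
  proof
    fix n
    have "expresses n (Neg (meets_formula U n)) (\<lambda>M q. comeager_in (hits M (X - U)) q)"
      using expresses_Neg[OF expresses_meets]
      by (rule expresses_cong) (simp add: comeager_compl_open[OF U] meets_iff[OF U, symmetric])
    then show "\<exists>\<phi>. expresses n \<phi> (\<lambda>M q. comeager_in (hits M (X - U)) q)" by blast
  qed
  moreover have "U \<subseteq> X" using U by (rule openin_subset)
  ultimately show ?thesis unfolding good_def using baire_prop_open[OF U] by blast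
qed

theorem borel_good:
  assumes "A \<in> borel_sets_of (logic_space S ar)"
  shows "good A"
  using assms unfolding borel_sets_of_def
proof (induction rule: sigma_sets.induct)
  case (Basic a) then show ?case using good_open by blast
next
  case Empty then show ?case using good_open[OF openin_empty] by simp
next
  case (Compl a) show ?case by (rule good_compl[OF Compl.IH])
next
  case (Union a) show ?case by (rule good_UN[OF Union.IH])
qed

section \<open>Invariant Borel sets\<close>

lemma hits_invariant:
  assumes AX: "A \<subseteq> X" and inv: "\<And>g. g \<in> G \<Longrightarrow> perm_act S ar g ` A = A" and M: "M \<in> X"
  shows "hits M A = (if M \<in> A then G else {})"
proof -
  have "act h M \<in> A \<longleftrightarrow> M \<in> A" if h: "h \<in> G" for h
  proof
    assume "M \<in> A"
    then have "perm_act S ar (inv h) M \<in> A" using inv[OF inv_G[OF h]] by blast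
    then show "act h M \<in> A" using perm_act_inv[OF h] by simp
  next
    assume "act h M \<in> A"
    then have "act h M \<in> perm_act S ar (inv h) ` A" using inv[OF inv_G[OF h]] by simp
    then obtain M' where M': "M' \<in> A" "act h M = perm_act S ar (inv h) M'" by blast
    then have "act h M = act h M'" using perm_act_inv[OF h] by simp
    then have "M = M'" using act_inj[OF h M] M' AX by blast
    then show "M \<in> A" using M' by simp
  qed
  then show ?thesis unfolding hits_def by auto
qed

end

theorem proposition6:
  fixes S :: "nat set" and ar :: "nat \<Rightarrow> nat"
    and FA :: "nat \<Rightarrow> nat" and FR :: "nat \<Rightarrow> nat list set"
    and A :: "(nat \<Rightarrow> nat list \<Rightarrow> bool) set"
  assumes "\<And>i. FR i \<subseteq> tuples (FA i)"
    and "A \<in> borel_sets_of (logic_space S ar)"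
    and "\<And>g. g \<in> Aut FR \<Longrightarrow> perm_act S ar g ` A = A"
  shows "definable S ar FA FR A"
proof -
  interpret fixed_family S ar FA FR using assms(1) by unfold_locales
  have good: "good A" using assms(2) by (rule borel_good)
  then obtain \<phi> where \<phi>: "expresses 0 \<phi> (\<lambda>M q. comeager_in (hits M A) q)"
    unfolding good_def vaught_definable_def by blast
  have "M \<in> A \<longleftrightarrow> sat FR M (\<lambda>_. 0) \<phi>" if M: "M \<in> X" for M
  proof -
    have "sat FR M (\<lambda>_. 0) \<phi> \<longleftrightarrow> comeager_in (hits M A) []" using \<phi> M unfolding expresses_def by simp
    also have "\<dots> \<longleftrightarrow> M \<in> A"
      using hits_invariant[OF _ assms(3) M] good comeager_G not_comeager_empty[OF valid_Nil]
      unfolding good_def by auto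
    finally show ?thesis by simp
  qed
  moreover have "sentence S ar FA \<phi>" using \<phi> unfolding expresses_def sentence_def by auto
  ultimately show ?thesis unfolding definable_def by blast
qed

end
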